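(* Let $H$ be a real Hilbert space, $I=\{1,\dots,M\}$, let $f_i,h_i,T_i$ ($i\in I$) satisfy Assumption (A1)–(A4) and the parameters satisfy Condition (C) (described below). Consider the sequences generated by the Distributed Accelerated Incremental Algorithm below, and assume that for each $i\in I$ the sequence $\{y^{(i)}_n\}$ is bounded. Then: (a) $\lim_{n\to\infty}\frac{\|x_{n+1}-x_n\|}{\lambda_n}=\lim_{n\to\infty}\|x_{n+1}-x_n\|=0$; (b) for every $\bar x\in S$ and $i\in I$ there exist constants $Q_1,Q_2\ge0$ such that for all $n$, $$\|w^{(i+1)}_n-\bar x\|^2\le\|w^{(i)}_n-\bar x\|^2+\theta_nQ_1+\alpha_nQ_2-(1-\alpha_n)\|T_i(y^{(i)}_n)-y^{(i)}_n\|^2-\|z^{(i)}_n-y^{(i)}_n\|^2+2\lambda_n\big(f_i(\bar x)-f_i(y^{(i)}_n)\big)+2\lambda_n\langle d^{(i)}_{n+1},y^{(i)}_n-\bar x\rangle.$$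
   Context: Assumption (A1): each $f_i:H\to\mathbb{R}$ is continuous and convex. (A2): each $h_i:H\to\mathbb{R}$ is convex and Fréchet differentiable, and $\nabla h_i$ is $(1/L_i)$-Lipschitz continuous for some $L_i>0$. (A3): each $T_i:H\to H$ is firmly nonexpansive, i.e. $\|T_ix-T_iy\|^2\le\langle T_ix-T_iy,x-y\rangle$ for all $x,y$. (A4): $S=\bigcap_{i=1}^M\mathrm{Fix}\,T_i\neq\emptyset$ and, with $\psi=\sum_{i=1}^M(f_i+h_i)$, $\Omega=\{\hat x\in S:\psi(\hat x)=\min_{x\in S}\psi(x)\}\neq\emptyset$. Condition (C): $\{\theta_n\},\{\lambda_n\},\{\beta_n\},\{\alpha_n\}$ are decreasing real sequences converging to $0$ with $\theta_n\in[0,1)$, $\lambda_n\in(0,2\min_{i\in I}L_i]$, $\beta_n\in(0,1]$, $\alpha_n\in(0,1]$, and: (C1) $\sum_n\alpha_n=\infty$; (C2) $\lim_n\frac{1}{\alpha_{n+1}}\big|\frac{1}{\lambda_{n+1}}-\frac{1}{\lambda_n}\big|=0$; (C3) $\lim_n\frac{1}{\lambda_{n+1}}\big|1-\frac{\alpha_n}{\alpha_{n+1}}\big|=0$; (C4) $\lim_n\frac{\alpha_n}{\lambda_n}=0$; (C5) $\lim_n\frac{\theta_n}{\alpha_{n+1}\lambda_{n+1}}=0$; (C6) $\frac{\lambda_n}{\lambda_{n+1}}\le\sigma$ for some $\sigma\ge1$; (C7) $\lim_n\frac{\beta_n}{\alpha_{n+1}}=0$. $\mathrm{prox}_{\lambda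 g}(x)=\arg\min_y\{g(y)+\frac{1}{2\lambda}\|x-y\|^2\}$. Distributed Accelerated Incremental Algorithm: choose $x_1\in H$, $w^{(i)}_0,z^{(i)}_0,u^{(i)}\in H$ and set $d^{(i)}_1=-\nabla h_i(z^{(i)}_0)$ ($i\in I$). For $n=1,2,\dots$: set $w^{(1)}_n=x_n$; for $i=1,\dots,M$ compute $z^{(i)}_n=w^{(i)}_n+\theta_n(w^{(i)}_n-w^{(i)}_{n-1})$, $d^{(i)}_{n+1}=-\nabla h_i(z^{(i)}_n)+\beta_nd^{(i)}_n$, $y^{(i)}_n=\mathrm{prox}_{\lambda_nf_i}(z^{(i)}_n+\lambda_nd^{(i)}_{n+1})$, $w^{(i+1)}_n=\alpha_nu^{(i)}+(1-\alpha_n)T_i(y^{(i)}_n)$; then set $x_{n+1}=w^{(M+1)}_n$. *)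

theory Defs
  imports "HOL-Analysis.Analysis"
begin

text \<open>Proximal operator: prox_{lam g}(x) = argmin_y { g y + 1/(2 lam) ||x - y||^2 }.
  For g convex continuous and lam > 0 the minimiser exists and is unique.\<close>
definition prox :: "real \<Rightarrow> ('a::real_normed_vector \<Rightarrow> real) \<Rightarrow> 'a \<Rightarrow> 'a" where
  "prox lam g x = (SOME y. \<forall>v. g y + (1 / (2 * lam)) * (norm (x - y))\<^sup>2
                              \<le> g v + (1 / (2 * lam)) * (norm (x - v))\<^sup>2)"

definition firmly_nonexpansive :: "('a::real_inner \<Rightarrow> 'a) \<Rightarrow> bool" where
  "firmly_nonexpansive T \<longleftrightarrow> (\<forall>x y. (norm (T x - T y))\<^sup>2 \<le> inner (T x - T y) (x - y))"

definition Fix :: "('a \<Rightarrow> 'a) \<Rightarrow> 'a set" where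
  "Fix T = {x. T x = x}"

end

theory Submission
  imports Defs
begin

text \<open>
  Part (b) adds up three one-step estimates: for a fixed point q of the firmly nonexpansive
  T_i, the anchored step w_{i+1} = \<alpha> u_i + (1 - \<alpha>) T_i y gains the term
  -(1 - \<alpha>) |T_i y - y|^2; the proximal step y = prox (z + \<lambda> d) satisfies a three-point
  inequality; and the inertial extrapolation z = w + \<theta> (w - w_prev) costs O(\<theta>), since the
  boundedness of y propagates through the update formulas to all iterates.

  For part (a), T_i and the gradient step v - \<lambda> \<nabla>h_i(v) are nonexpansive (the latter by
  Baillon--Haddad), and prox moves by at most |a - a'| + |\<lambda>'/\<lambda> - 1| |a - prox a| when its
  argument and step size change. Hence the increments of every inner step contract by the
  factor 1 - \<alpha>_{n+1} up to a perturbation; chaining the M inner steps and dividing by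
  \<lambda>_{n+1} gives c_{n+1} \<le> (1 - \<alpha>_{n+1}) c_n + \<alpha>_{n+1} r_n for c_n = |x_{n+1} - x_n| / \<lambda>_n,
  where (C2)--(C7) force r_n \<longrightarrow> 0. As \<Sum> \<alpha>_n = \<infinity>, Xu's lemma yields c_n \<longrightarrow> 0,
  and then |x_{n+1} - x_n| = \<lambda>_n c_n \<longrightarrow> 0.
\<close>

section \<open>Inner product identities and firmly nonexpansive maps\<close>

lemma norm_add_scaleR_square:
  fixes X Y :: "'a::real_inner"
  shows "(norm (X + t *\<^sub>R Y))\<^sup>2 = (norm X)\<^sup>2 + 2 * t * inner X Y + t\<^sup>2 * (norm Y)\<^sup>2"
  unfolding power2_norm_eq_inner
  by (simp add: inner_add_left inner_add_right inner_commute power2_eq_square algebra_simps)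

lemma norm_convex_comb_square:
  fixes X Y :: "'a::real_inner"
  shows "(norm (a *\<^sub>R X + (1 - a) *\<^sub>R Y))\<^sup>2
    = a * (norm X)\<^sup>2 + (1 - a) * (norm Y)\<^sup>2 - a * (1 - a) * (norm (X - Y))\<^sup>2"
  unfolding power2_norm_eq_inner
  by (simp add: inner_add_left inner_add_right inner_diff_left inner_diff_right inner_commute
      power2_eq_square algebra_simps)

lemma firmly_nonexpansive_imp_nonexpansive:
  assumes "firmly_nonexpansive T"
  shows "norm (T p - T q) \<le> norm (p - q)"
proof -
  have "(norm (T p - T q))\<^sup>2 \<le> inner (T p - T q) (p - q)"
    using assms unfolding firmly_nonexpansive_def by blast
  also have "\<dots> \<le> norm (T p - T q) * norm (p - q)"
    by (rule norm_cauchy_schwarz)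
  finally show ?thesis
    by (metis mult_le_cancel_left norm_ge_zero order_le_less power2_eq_square)
qed

lemma firmly_nonexpansive_fixpoint_ineq:
  assumes "firmly_nonexpansive T" "T q = q"
  shows "(norm (T p - q))\<^sup>2 \<le> (norm (p - q))\<^sup>2 - (norm (T p - p))\<^sup>2"
proof -
  have "(norm (T p - q))\<^sup>2 \<le> inner (T p - q) (p - q)"
    using assms unfolding firmly_nonexpansive_def by metis
  moreover have "T p - p = (T p - q) - (p - q)"
    by simp
  then have "(norm (T p - p))\<^sup>2 = (norm (T p - q))\<^sup>2 - 2 * inner (T p - q) (p - q) + (norm (p - q))\<^sup>2"
    by (simp only: power2_norm_eq_inner inner_diff_left inner_diff_right inner_commute) simp
  ultimately show ?thesis
    by linarith
qed

section \<open>Proximal maps\<close>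

lemma convex_continuous_lower_bound:
  fixes f :: "'a::real_normed_vector \<Rightarrow> real"
  assumes cont: "continuous_on UNIV f" and conv: "convex_on UNIV f"
  obtains r where "r > 0" "\<And>v. f a - 1 - norm (v - a) / r \<le> f v"
proof -
  have "isCont f a"
    using cont continuous_on_eq_continuous_at by blast
  then obtain r where r: "r > 0" "\<And>v. norm (v - a) \<le> r \<Longrightarrow> \<bar>f v - f a\<bar> < 1"
    unfolding continuous_at_real_range by (meson dense zero_less_one le_less_trans)
  have "f a - 1 - norm (v - a) / r \<le> f v" for v
  proof (cases "norm (v - a) \<le> r")
    case True
    with r show ?thesis
      by (smt (verit) divide_nonneg_pos norm_ge_zero)
  next
    case False
    then have far: "0 < r" "r < norm (v - a)"
      using r by auto
    define t where "t = r / norm (v - a)"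
    have t: "0 < t" "t < 1"
      using far by (auto simp: t_def divide_less_eq intro!: divide_pos_pos)
    have "v \<noteq> a"
      using far by force
    moreover have "((1 - t) *\<^sub>R a + t *\<^sub>R v) - a = t *\<^sub>R (v - a)"
      by (simp add: algebra_simps)
    ultimately have "norm (((1 - t) *\<^sub>R a + t *\<^sub>R v) - a) = r"
      using far by (simp add: t_def)
    then have "f a - 1 < f ((1 - t) *\<^sub>R a + t *\<^sub>R v)"
      using r by fastforce
    also have "\<dots> \<le> (1 - t) * f a + t * f v"
      using convex_onD[OF conv, of t a v] t by simp
    finally have "f a - 1 / t < f v"
      using t by (simp add: field_simps)
    moreover have "1 / t = norm (v - a) / r"
      by (simp add: t_def)
    ultimately show ?thesis
      using r by (smt (verit) divide_nonneg_pos norm_ge_zero)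
  qed
  with r that show ?thesis
    by blast
qed

lemma prox_objective_midpoint:
  fixes f :: "'a::real_inner \<Rightarrow> real"
  assumes conv: "convex_on UNIV f"
  shows "f ((1/2) *\<^sub>R (p + q)) + c * (norm (a - (1/2) *\<^sub>R (p + q)))\<^sup>2
    \<le> (f p + c * (norm (a - p))\<^sup>2) / 2 + (f q + c * (norm (a - q))\<^sup>2) / 2 - c / 4 * (norm (p - q))\<^sup>2"
proof -
  have "f ((1/2) *\<^sub>R (p + q)) \<le> f p / 2 + f q / 2"
    using convex_onD[OF conv, of "1/2" p q] by (simp add: scaleR_add_right)
  moreover have "a - (1/2) *\<^sub>R (p + q) = (1/2) *\<^sub>R (a - p) + (1 - 1/2) *\<^sub>R (a - q)"
    by (simp add: algebra_simps flip: scaleR_add_right)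
  then have mid: "(norm (a - (1/2) *\<^sub>R (p + q)))\<^sup>2
      = (norm (a - p))\<^sup>2 / 2 + (norm (a - q))\<^sup>2 / 2 - (norm (p - q))\<^sup>2 / 4"
    using norm_convex_comb_square[of "1/2" "a - p" "a - q"] by (simp add: norm_minus_commute)
  have "c * (norm (a - (1/2) *\<^sub>R (p + q)))\<^sup>2
      = c * (norm (a - p))\<^sup>2 / 2 + c * (norm (a - q))\<^sup>2 / 2 - c / 4 * (norm (p - q))\<^sup>2"
    unfolding mid by (simp add: algebra_simps)
  ultimately show ?thesis
    by (simp add: field_simps)
qed

lemma strongly_midpoint_convex_attains_min:
  fixes g :: "'a::{real_normed_vector,complete_space} \<Rightarrow> real"
  assumes cont: "continuous_on UNIV g" and bdd: "bdd_below (range g)" and c: "c > 0"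
    and mid: "\<And>p q. g ((1/2) *\<^sub>R (p + q)) \<le> g p / 2 + g q / 2 - c * (norm (p - q))\<^sup>2"
  obtains y where "\<And>v. g y \<le> g v"
proof -
  define m where "m = Inf (range g)"
  have m: "m \<le> g v" for v
    unfolding m_def using bdd by (simp add: cInf_lower)
  define \<epsilon> where "\<epsilon> k = 1 / (real k + 1)" for k :: nat
  have "\<exists>v. g v < m + \<epsilon> k" for k
    using cInf_lessD[of "range g" "m + \<epsilon> k"] by (auto simp: m_def \<epsilon>_def)
  then obtain vs where vs: "\<And>k. g (vs k) < m + \<epsilon> k"
    by metis
  have vs_close: "c * (norm (vs j - vs k))\<^sup>2 < \<epsilon> j / 2 + \<epsilon> k / 2" for j k
    using mid[of "vs j" "vs k"] m[of "(1/2) *\<^sub>R (vs j + vs k)"] vs[of j] vs[of k] by linarith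
  have "Cauchy vs"
  proof (rule CauchyI)
    fix e :: real
    assume e: "e > 0"
    then obtain N where N: "inverse (real (Suc N)) < c * e\<^sup>2"
      using reals_Archimedean c by (metis mult_pos_pos zero_less_power)
    have "norm (vs j - vs k) < e" if "N \<le> j" "N \<le> k" for j k
    proof -
      have "\<epsilon> j \<le> inverse (real (Suc N))" "\<epsilon> k \<le> inverse (real (Suc N))"
        using that by (simp_all add: \<epsilon>_def field_simps)
      then have "c * (norm (vs j - vs k))\<^sup>2 < c * e\<^sup>2"
        using vs_close[of j k] N by linarith
      then show ?thesis
        using c e by (simp add: power_less_imp_less_base)
    qed
    then show "\<exists>M. \<forall>j\<ge>M. \<forall>k\<ge>M. norm (vs j - vs k) < e"
      by blast
  qed
  then obtain y where y: "vs \<longlonglongrightarrow> y"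
    using Cauchy_convergent convergent_def by blast
  have "isCont g y"
    using cont by (simp add: continuous_on_eq_continuous_at)
  then have "(\<lambda>k. g (vs k)) \<longlonglongrightarrow> g y"
    using y by (rule isCont_tendsto_compose)
  moreover have "(\<lambda>k. m + \<epsilon> k) \<longlonglongrightarrow> m"
    using tendsto_add[OF tendsto_const LIMSEQ_inverse_real_of_nat, of m]
    by (simp add: \<epsilon>_def inverse_eq_divide add.commute)
  ultimately have "g y \<le> m"
    using vs by (intro LIMSEQ_le) (auto intro: less_imp_le)
  with m that show ?thesis
    by (meson order_trans)
qed

lemma prox_objective_bounded_below:
  fixes f :: "'a::real_normed_vector \<Rightarrow> real"
  assumes cont: "continuous_on UNIV f" and conv: "convex_on UNIV f" and c: "c > 0"
  shows "bdd_below (range (\<lambda>v. f v + c * (norm (a - v))\<^sup>2))"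
proof -
  obtain r where r: "r > 0" "\<And>v. f a - 1 - norm (v - a) / r \<le> f v"
    using convex_continuous_lower_bound[OF cont conv] by blast
  have "f a - 1 - 1 / (4 * c * r\<^sup>2) \<le> f v + c * (norm (a - v))\<^sup>2" for v
  proof -
    have "0 \<le> c * (norm (a - v) - 1 / (2 * c * r))\<^sup>2"
      using c by simp
    also have "\<dots> = c * (norm (a - v))\<^sup>2 - norm (a - v) / r + 1 / (4 * c * r\<^sup>2)"
      using c r by (simp add: power2_eq_square field_simps)
    finally show ?thesis
      using r(2)[of v] by (simp add: norm_minus_commute)
  qed
  then show ?thesis
    by (intro bdd_belowI2)
qed

lemma prox_minimiser_exists:
  fixes f :: "'a::{real_inner,complete_space} \<Rightarrow> real"
  assumes cont: "continuous_on UNIV f" and conv: "convex_on UNIV f" and c: "c > 0"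
  obtains y where "\<And>v. f y + c * (norm (a - y))\<^sup>2 \<le> f v + c * (norm (a - v))\<^sup>2"
proof -
  let ?g = "\<lambda>v. f v + c * (norm (a - v))\<^sup>2"
  have "continuous_on UNIV ?g"
    by (intro continuous_intros cont)
  moreover have "bdd_below (range ?g)"
    by (rule prox_objective_bounded_below[OF cont conv c])
  moreover have "?g ((1/2) *\<^sub>R (p + q)) \<le> ?g p / 2 + ?g q / 2 - c / 4 * (norm (p - q))\<^sup>2" for p q
    by (rule prox_objective_midpoint[OF conv])
  ultimately obtain y where "\<And>v. ?g y \<le> ?g v"
    using strongly_midpoint_convex_attains_min[of ?g "c / 4"] c by auto
  then show ?thesis
    using that by blast
qed

lemma prox_minimises:
  fixes f :: "'a::{real_inner,complete_space} \<Rightarrow> real"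
  assumes "continuous_on UNIV f" "convex_on UNIV f" "lam > 0"
  shows "f (prox lam f a) + (1 / (2 * lam)) * (norm (a - prox lam f a))\<^sup>2
    \<le> f v + (1 / (2 * lam)) * (norm (a - v))\<^sup>2"
proof -
  obtain y where "\<forall>v. f y + (1 / (2 * lam)) * (norm (a - y))\<^sup>2 \<le> f v + (1 / (2 * lam)) * (norm (a - v))\<^sup>2"
    using prox_minimiser_exists[OF assms(1,2), of "1 / (2 * lam)"] assms(3) by auto
  then show ?thesis
    unfolding prox_def by (rule someI2) blast
qed

lemma prox_variational_ineq:
  fixes f :: "'a::{real_inner,complete_space} \<Rightarrow> real"
  assumes cont: "continuous_on UNIV f" and conv: "convex_on UNIV f" and lam: "lam > 0"
  shows "inner (a - prox lam f a) (v - prox lam f a) \<le> lam * (f v - f (prox lam f a))"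
proof (rule field_le_epsilon)
  fix e :: real
  assume e: "e > 0"
  define p where "p = prox lam f a"
  define N where "N = (norm (v - p))\<^sup>2"
  define t where "t = min 1 (e / (N + 1))"
  have N: "N \<ge> 0"
    by (simp add: N_def)
  have t: "0 < t" "t \<le> 1"
    using e N by (auto simp: t_def)
  have "t * N \<le> e / (N + 1) * N"
    using N by (intro mult_right_mono) (auto simp: t_def)
  also have "\<dots> \<le> e"
    using e N by (simp add: field_simps)
  finally have tN: "t * N \<le> e" .
  define q where "q = p + t *\<^sub>R (v - p)"
  have "f q - f p \<le> t * (f v - f p)"
    using convex_onD[OF conv, of t p v] t by (simp add: q_def algebra_simps)
  then have "2 * lam * (f q - f p) \<le> 2 * lam * (t * (f v - f p))"
    using lam by simp
  moreover have "(norm (a - q))\<^sup>2 = (norm (a - p))\<^sup>2 - 2 * t * inner (a - p) (v - p) + t\<^sup>2 * N"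
    using norm_add_scaleR_square[of "a - p" "- t" "v - p"] by (simp add: q_def N_def algebra_simps)
  moreover have "f p + (1 / (2 * lam)) * (norm (a - p))\<^sup>2 \<le> f q + (1 / (2 * lam)) * (norm (a - q))\<^sup>2"
    unfolding p_def by (rule prox_minimises[OF cont conv lam])
  then have "2 * lam * (f p + (1 / (2 * lam)) * (norm (a - p))\<^sup>2)
      \<le> 2 * lam * (f q + (1 / (2 * lam)) * (norm (a - q))\<^sup>2)"
    using lam by simp
  then have "2 * lam * f p + (norm (a - p))\<^sup>2 \<le> 2 * lam * f q + (norm (a - q))\<^sup>2"
    using lam by (simp add: distrib_left)
  ultimately have "t * (2 * inner (a - p) (v - p)) \<le> t * (2 * lam * (f v - f p) + t * N)"
    by (simp add: algebra_simps power2_eq_square)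
  then have "inner (a - p) (v - p) \<le> lam * (f v - f p) + t * N / 2"
    using t by simp
  then show "inner (a - p) (v - p) \<le> lam * (f v - f p) + e"
    using tN e by linarith
qed

lemma prox_three_point_ineq:
  fixes f :: "'a::{real_inner,complete_space} \<Rightarrow> real"
  assumes "continuous_on UNIV f" "convex_on UNIV f" "lam > 0"
    and p: "p = prox lam f (z + lam *\<^sub>R d)"
  shows "(norm (p - v))\<^sup>2 \<le> (norm (z - v))\<^sup>2 - (norm (z - p))\<^sup>2 + 2 * lam * (f v - f p)
    + 2 * lam * inner d (p - v)"
proof -
  have "inner (z - p) (v - p) + lam * inner d (v - p) \<le> lam * (f v - f p)"
    using prox_variational_ineq[OF assms(1-3), of "z + lam *\<^sub>R d" v]
    by (simp add: p inner_add_left inner_diff_left)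
  moreover have "2 * inner (z - p) (v - p) = (norm (z - p))\<^sup>2 + (norm (p - v))\<^sup>2 - (norm (z - v))\<^sup>2"
    by (simp add: dot_norm_neg norm_minus_commute)
  moreover have "inner d (v - p) = - inner d (p - v)"
    by (simp add: inner_diff_right)
  ultimately show ?thesis
    by (simp add: algebra_simps)
qed

lemma prox_dist_le:
  fixes f :: "'a::{real_inner,complete_space} \<Rightarrow> real"
  assumes cont: "continuous_on UNIV f" and conv: "convex_on UNIV f"
    and lam1: "lam1 > 0" and lam2: "lam2 > 0"
  shows "norm (prox lam1 f a1 - prox lam2 f a2)
    \<le> norm (a1 - a2) + \<bar>lam2 / lam1 - 1\<bar> * norm (a1 - prox lam1 f a1)"
proof -
  define p1 where "p1 = prox lam1 f a1"
  define p2 where "p2 = prox lam2 f a2"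
  define r where "r = lam2 / lam1"
  have r: "r > 0"
    using lam1 lam2 by (simp add: r_def)
  have "r * inner (a1 - p1) (p2 - p1) \<le> r * (lam1 * (f p2 - f p1))"
    using prox_variational_ineq[OF cont conv lam1, of a1 p2] r by (simp add: p1_def)
  moreover have "r * (lam1 * (f p2 - f p1)) = lam2 * (f p2 - f p1)"
    using lam1 by (simp add: r_def)
  moreover have "inner (a2 - p2) (p1 - p2) \<le> lam2 * (f p1 - f p2)"
    using prox_variational_ineq[OF cont conv lam2, of a2 p1] by (simp add: p2_def)
  ultimately have "inner (r *\<^sub>R (a1 - p1) - (a2 - p2)) (p1 - p2) \<ge> 0"
    by (simp add: inner_diff_left inner_diff_right algebra_simps)
  moreover have "r *\<^sub>R (a1 - p1) - (a2 - p2) = ((a1 - a2) + (r - 1) *\<^sub>R (a1 - p1)) - (p1 - p2)"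
    by (simp add: algebra_simps)
  ultimately have "(norm (p1 - p2))\<^sup>2 \<le> inner ((a1 - a2) + (r - 1) *\<^sub>R (a1 - p1)) (p1 - p2)"
    by (simp add: inner_diff_left power2_norm_eq_inner)
  also have "\<dots> \<le> norm ((a1 - a2) + (r - 1) *\<^sub>R (a1 - p1)) * norm (p1 - p2)"
    by (rule norm_cauchy_schwarz)
  finally have "norm (p1 - p2) \<le> norm ((a1 - a2) + (r - 1) *\<^sub>R (a1 - p1))"
    by (metis mult_le_cancel_right norm_ge_zero not_le order_le_less power2_eq_square)
  also have "\<dots> \<le> norm (a1 - a2) + \<bar>r - 1\<bar> * norm (a1 - p1)"
    using norm_triangle_ineq[of "a1 - a2" "(r - 1) *\<^sub>R (a1 - p1)"] by simp
  finally show ?thesis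
    by (simp add: p1_def p2_def r_def)
qed

section \<open>Convex functions with Lipschitz gradient\<close>

lemma has_real_derivative_along_line:
  fixes h :: "'a::real_inner \<Rightarrow> real"
  assumes der: "\<And>p. (h has_derivative (\<lambda>v. inner (G p) v)) (at p)"
  shows "((\<lambda>t. h (p + t *\<^sub>R v)) has_real_derivative inner (G (p + t *\<^sub>R v)) v) (at t)"
proof -
  have "((\<lambda>t. p + t *\<^sub>R v) has_derivative (\<lambda>s. s *\<^sub>R v)) (at t)"
    by (auto intro!: derivative_eq_intros)
  from diff_chain_at[OF this der]
  have "((\<lambda>t. h (p + t *\<^sub>R v)) has_derivative (\<lambda>s. inner (G (p + t *\<^sub>R v)) v * s)) (at t)"
    by (simp add: o_def mult.commute)
  then show ?thesis
    by (simp add: has_field_derivative_def)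
qed

lemma convex_gradient_ineq:
  fixes h :: "'a::real_inner \<Rightarrow> real"
  assumes conv: "convex_on UNIV h"
    and der: "\<And>p. (h has_derivative (\<lambda>v. inner (G p) v)) (at p)"
  shows "h p + inner (G p) (q - p) \<le> h q"
proof -
  define \<phi> where "\<phi> t = h (p + t *\<^sub>R (q - p))" for t :: real
  have "convex_on UNIV \<phi>"
  proof (rule convex_onI)
    fix t x y :: real
    assume "0 < t" "t < 1"
    have "p + ((1 - t) * x + t * y) *\<^sub>R (q - p)
        = (1 - t) *\<^sub>R (p + x *\<^sub>R (q - p)) + t *\<^sub>R (p + y *\<^sub>R (q - p))"
      by (simp add: algebra_simps)
    then show "\<phi> ((1 - t) *\<^sub>R x + t *\<^sub>R y) \<le> (1 - t) * \<phi> x + t * \<phi> y"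
      using convex_onD[OF conv, of t] \<open>0 < t\<close> \<open>t < 1\<close> by (simp add: \<phi>_def)
  qed simp
  moreover have "(\<phi> has_field_derivative inner (G p) (q - p)) (at 0)"
    using has_real_derivative_along_line[OF der, of p "q - p" 0] by (simp add: \<phi>_def[abs_def])
  ultimately have "inner (G p) (q - p) * (1 - 0) \<le> \<phi> 1 - \<phi> 0"
    by (intro convex_on_imp_above_tangent[where A = UNIV]) auto
  then show ?thesis
    by (simp add: \<phi>_def)
qed

lemma descent_lemma:
  fixes h :: "'a::real_inner \<Rightarrow> real"
  assumes der: "\<And>p. (h has_derivative (\<lambda>v. inner (G p) v)) (at p)"
    and L: "L > 0" and lip: "\<And>p q. norm (G p - G q) \<le> (1 / L) * norm (p - q)"
  shows "h q \<le> h p + inner (G p) (q - p) + (norm (q - p))\<^sup>2 / (2 * L)"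
proof -
  define v where "v = q - p"
  define \<psi> where "\<psi> t = h (p + t *\<^sub>R v) - t * inner (G p) v - t\<^sup>2 * (norm v)\<^sup>2 / (2 * L)" for t
  have "\<psi> 1 \<le> \<psi> 0"
  proof (rule DERIV_nonpos_imp_nonincreasing[of 0 1])
    fix t :: real
    assume t: "0 \<le> t" "t \<le> 1"
    have deriv: "(\<psi> has_real_derivative
        inner (G (p + t *\<^sub>R v)) v - inner (G p) v - t * (norm v)\<^sup>2 / L) (at t)"
      unfolding \<psi>_def using L
      by (auto intro!: derivative_eq_intros has_real_derivative_along_line[OF der]
          simp: power2_eq_square)
    have "inner (G (p + t *\<^sub>R v)) v - inner (G p) v \<le> norm (G (p + t *\<^sub>R v) - G p) * norm v"
      using norm_cauchy_schwarz[of "G (p + t *\<^sub>R v) - G p" v] by (simp add: inner_diff_left)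
    also have "\<dots> \<le> (1 / L) * norm (t *\<^sub>R v) * norm v"
      using lip[of "p + t *\<^sub>R v" p] by (intro mult_right_mono) auto
    also have "\<dots> = t * (norm v)\<^sup>2 / L"
      using t by (simp add: power2_eq_square)
    finally show "\<exists>y. (\<psi> has_real_derivative y) (at t) \<and> y \<le> 0"
      using deriv by force
  qed simp
  then show ?thesis
    by (simp add: \<psi>_def v_def)
qed

lemma gradient_cocoercive:
  fixes h :: "'a::real_inner \<Rightarrow> real"
  assumes conv: "convex_on UNIV h"
    and der: "\<And>p. (h has_derivative (\<lambda>v. inner (G p) v)) (at p)"
    and L: "L > 0" and lip: "\<And>p q. norm (G p - G q) \<le> (1 / L) * norm (p - q)"
  shows "L * (norm (G p - G q))\<^sup>2 \<le> inner (G p - G q) (p - q)"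
proof -
  have gap: "(L / 2) * (norm (G q - G p))\<^sup>2 \<le> h q - h p - inner (G p) (q - p)" for p q
  proof -
    define r where "r = q - L *\<^sub>R (G q - G p)"
    have "h r \<le> h q + inner (G q) (r - q) + (norm (r - q))\<^sup>2 / (2 * L)"
      by (rule descent_lemma[OF der L lip])
    moreover have "h p + inner (G p) (r - p) \<le> h r"
      by (rule convex_gradient_ineq[OF conv der])
    moreover have "(norm (r - q))\<^sup>2 / (2 * L) = (L / 2) * (norm (G q - G p))\<^sup>2"
      using L by (simp add: r_def power2_eq_square)
    moreover have "inner (G q) (r - q) - inner (G p) (r - p)
        = - inner (G p) (q - p) - L * (norm (G q - G p))\<^sup>2"
      by (simp add: r_def power2_norm_eq_inner inner_diff_left inner_diff_right algebra_simps)
    ultimately show ?thesis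
      by linarith
  qed
  have "inner (G p - G q) (p - q) = - inner (G p) (q - p) - inner (G q) (p - q)"
    by (simp add: inner_diff_left inner_diff_right)
  then show ?thesis
    using gap[of p q] gap[of q p] by (simp add: norm_minus_commute)
qed

lemma gradient_step_nonexpansive:
  fixes h :: "'a::real_inner \<Rightarrow> real"
  assumes conv: "convex_on UNIV h"
    and der: "\<And>p. (h has_derivative (\<lambda>v. inner (G p) v)) (at p)"
    and L: "L > 0" and lip: "\<And>p q. norm (G p - G q) \<le> (1 / L) * norm (p - q)"
    and lam: "0 \<le> lam" "lam \<le> 2 * L"
  shows "norm ((p - lam *\<^sub>R G p) - (q - lam *\<^sub>R G q)) \<le> norm (p - q)"
proof -
  define N where "N = (norm (G p - G q))\<^sup>2"
  have step: "(p - lam *\<^sub>R G p) - (q - lam *\<^sub>R G q) = (p - q) + (- lam) *\<^sub>R (G p - G q)"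
    by (simp add: algebra_simps)
  have "(norm ((p - lam *\<^sub>R G p) - (q - lam *\<^sub>R G q)))\<^sup>2
      = (norm (p - q))\<^sup>2 - 2 * lam * inner (p - q) (G p - G q) + lam\<^sup>2 * N"
    unfolding step norm_add_scaleR_square N_def by simp
  also have "\<dots> \<le> (norm (p - q))\<^sup>2 - 2 * lam * (L * N) + lam\<^sup>2 * N"
    using mult_left_mono[OF gradient_cocoercive[OF conv der L lip, of p q], of lam] lam
    by (simp add: N_def inner_commute)
  also have "\<dots> = (norm (p - q))\<^sup>2 - lam * (2 * L - lam) * N"
    by (simp add: algebra_simps power2_eq_square)
  also have "\<dots> \<le> (norm (p - q))\<^sup>2"
    using lam by (simp add: N_def)
  finally show ?thesis
    by (simp add: power2_le_iff_abs_le)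
qed

section \<open>Perturbed contractions of real sequences\<close>

lemma not_summable_partial_sums_unbounded:
  fixes a :: "nat \<Rightarrow> real"
  assumes "\<And>n. n \<ge> N \<Longrightarrow> 0 \<le> a n" and "\<not> summable a"
  obtains k where "B < (\<Sum>j<k. a (N + j))"
proof -
  have "\<exists>k. B < (\<Sum>j<k. a (N + j))"
  proof (rule ccontr)
    assume "\<nexists>k. B < (\<Sum>j<k. a (N + j))"
    then have "summable (\<lambda>j. a (j + N))"
      using assms(1) by (intro summableI_nonneg_bounded[where x = B]) (auto simp: not_less add.commute)
    with assms(2) show False
      by (simp add: summable_iff_shift)
  qed
  then show ?thesis
    using that by blast
qed

lemma contraction_tendsto_zero:
  fixes a p :: "nat \<Rightarrow> real"
  assumes a: "\<And>n. n \<ge> N \<Longrightarrow> 0 \<le> a n \<and> a n \<le> 1" and not_summable: "\<not> summable a"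
    and p: "\<And>n. n \<ge> N \<Longrightarrow> 0 \<le> p n" and step: "\<And>n. n \<ge> N \<Longrightarrow> p (Suc n) \<le> (1 - a n) * p n"
  shows "p \<longlonglongrightarrow> 0"
proof -
  have p_exp: "p (N + k) \<le> exp (- (\<Sum>j<k. a (N + j))) * p N" for k
  proof (induction k)
    case (Suc k)
    have "p (N + Suc k) \<le> (1 - a (N + k)) * p (N + k)"
      using step[of "N + k"] by simp
    also have "\<dots> \<le> exp (- a (N + k)) * p (N + k)"
      using p[of "N + k"] exp_ge_add_one_self[of "- a (N + k)"] by (intro mult_right_mono) auto
    also have "\<dots> \<le> exp (- a (N + k)) * (exp (- (\<Sum>j<k. a (N + j))) * p N)"
      using Suc.IH by (intro mult_left_mono) auto
    finally show ?case
      by (simp add: exp_add[symmetric] algebra_simps)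
  qed simp
  have p_mono: "p (N + k + m) \<le> p (N + k)" for k m
  proof (induction m)
    case (Suc m)
    have "p (N + k + Suc m) \<le> (1 - a (N + k + m)) * p (N + k + m)"
      using step[of "N + k + m"] by simp
    also have "\<dots> \<le> p (N + k + m)"
      using a[of "N + k + m"] p[of "N + k + m"] by (simp add: mult_left_le_one_le)
    finally show ?case
      using Suc.IH by simp
  qed simp
  show ?thesis
  proof (rule LIMSEQ_I)
    fix e :: real
    assume e: "e > 0"
    obtain k where k: "p N / e < (\<Sum>j<k. a (N + j))"
      using not_summable_partial_sums_unbounded[of N a] a not_summable by blast
    define s where "s = (\<Sum>j<k. a (N + j))"
    have "p N < e * s"
      using k e by (simp add: s_def field_simps)
    also have "\<dots> < e * exp s"
      using e exp_gt_self[of s] by simp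
    finally have "exp (- s) * p N < e"
      by (simp add: exp_minus field_simps)
    then have "norm (p n - 0) < e" if "n \<ge> N + k" for n
      using p_exp[of k] p_mono[of k "n - (N + k)"] p[of n] that by (simp add: s_def)
    then show "\<exists>n0. \<forall>n\<ge>n0. norm (p n - 0) < e"
      by blast
  qed
qed

lemma perturbed_contraction_tendsto_zero:
  fixes a c g :: "nat \<Rightarrow> real"
  assumes a: "\<And>n. n \<ge> N \<Longrightarrow> 0 \<le> a n \<and> a n \<le> 1" and not_summable: "\<not> summable a"
    and g: "g \<longlonglongrightarrow> 0" and c: "\<And>n. n \<ge> N \<Longrightarrow> 0 \<le> c n"
    and step: "\<And>n. n \<ge> N \<Longrightarrow> c (Suc n) \<le> (1 - a n) * c n + a n * g n"
  shows "c \<longlonglongrightarrow> 0"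
proof (rule LIMSEQ_I)
  fix e :: real
  assume e: "e > 0"
  obtain N0 where N0: "\<And>n. n \<ge> N0 \<Longrightarrow> g n < e / 2"
    using LIMSEQ_D[OF g, of "e / 2"] e by (metis abs_less_iff diff_zero half_gt_zero real_norm_def)
  define p where "p n = max (c n - e / 2) 0" for n
  have "p \<longlonglongrightarrow> 0"
  proof (rule contraction_tendsto_zero[where N = "max N N0"])
    fix n
    assume n: "max N N0 \<le> n"
    then have an: "0 \<le> a n" "a n \<le> 1"
      using a by auto
    have "(1 - a n) * (c n - e / 2) + a n * (g n - e / 2) = (1 - a n) * c n + a n * g n - e / 2"
      by (simp add: field_simps)
    then have "c (Suc n) - e / 2 \<le> (1 - a n) * (c n - e / 2) + a n * (g n - e / 2)"
      using step[of n] n by simp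
    also have "\<dots> \<le> (1 - a n) * p n"
      using N0[of n] n an by (intro add_decreasing2 mult_left_mono mult_nonneg_nonpos) (auto simp: p_def)
    finally show "p (Suc n) \<le> (1 - a n) * p n"
      using an by (simp add: p_def)
  qed (use a not_summable in \<open>auto simp: p_def\<close>)
  then obtain n0 where n0: "\<And>n. n \<ge> n0 \<Longrightarrow> p n < e / 2"
    using LIMSEQ_D[of p 0 "e / 2"] e by (metis abs_less_iff diff_zero half_gt_zero real_norm_def)
  have "norm (c n - 0) < e" if "n \<ge> max N n0" for n
  proof -
    have "c n - e / 2 < e / 2"
      using n0[of n] max.cobounded1[of "c n - e / 2" 0] that unfolding p_def by linarith
    then show ?thesis
      using c[of n] that by simp
  qed
  then show "\<exists>n0. \<forall>n\<ge>n0. norm (c n - 0) < e"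
    by blast
qed

lemma iterated_perturbed_contraction:
  fixes e :: "nat \<Rightarrow> real"
  assumes M: "M \<ge> 1" and a: "0 \<le> a" "a \<le> 1" and b: "0 \<le> b" and e: "\<And>i. 0 \<le> e i"
    and step: "\<And>i. i \<in> {1..M} \<Longrightarrow> e (Suc i) \<le> (1 - a) * e i + b"
  shows "e (Suc M) \<le> (1 - a) * e 1 + M * b"
proof -
  have "e (Suc m) \<le> (1 - a) * e 1 + m * b" if "0 < m" "m \<le> M" for m
    using that
  proof (induction m rule: nat_induct_non_zero)
    case 1
    then show ?case
      using step[of 1] by simp
  next
    case (Suc m)
    have "e (Suc (Suc m)) \<le> (1 - a) * e (Suc m) + b"
      using step[of "Suc m"] Suc.prems by simp
    also have "\<dots> \<le> (1 - a) * ((1 - a) * e 1 + m * b) + b"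
      using Suc a by (intro add_right_mono mult_left_mono) auto
    also have "\<dots> \<le> (1 - a) * e 1 + Suc m * b"
    proof -
      have "(1 - a) * ((1 - a) * e 1) \<le> (1 - a) * e 1" "(1 - a) * (m * b) \<le> m * b"
        using a b e[of 1] by (simp_all add: mult_left_le_one_le)
      then show ?thesis
        by (simp add: algebra_simps)
    qed
    finally show ?case .
  qed
  then show ?thesis
    using M by simp
qed

lemma halving_recursion_bounded:
  fixes r :: "nat \<Rightarrow> real"
  assumes step: "\<And>m. m \<ge> N \<Longrightarrow> r (Suc m) \<le> G + r m / 2"
  obtains K where "\<And>n. r n \<le> K"
proof -
  define K where "K = 2 * \<bar>G\<bar> + (\<Sum>k\<le>N. \<bar>r k\<bar>)"
  have init: "r k \<le> K" if "k \<le> N" for k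
  proof -
    have "r k \<le> (\<Sum>k\<le>N. \<bar>r k\<bar>)"
      using that member_le_sum[of k "{..N}" "\<lambda>k. \<bar>r k\<bar>"] by force
    then show ?thesis
      by (simp add: K_def)
  qed
  have "r n \<le> K" for n
  proof (cases "n \<le> N")
    case False
    then have "N \<le> n"
      by simp
    then show ?thesis
    proof (induction n rule: dec_induct)
      case (step m)
      have "0 \<le> (\<Sum>k\<le>N. \<bar>r k\<bar>)"
        by (simp add: sum_nonneg)
      then show ?case
        using assms[OF step.hyps(1)] step.IH abs_ge_self[of G] unfolding K_def by linarith
    qed (use init in simp)
  qed (use init in simp)
  with that show ?thesis
    by blast
qed

section \<open>The distributed accelerated incremental algorithm\<close>

locale distributed_accelerated_incremental =
  fixes M :: nat
    and f h :: "nat \<Rightarrow> 'a::{real_inner,complete_space} \<Rightarrow> real"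
    and gh :: "nat \<Rightarrow> 'a \<Rightarrow> 'a"
    and L :: "nat \<Rightarrow> real"
    and T :: "nat \<Rightarrow> 'a \<Rightarrow> 'a"
    and \<theta> lam \<beta> \<alpha> :: "nat \<Rightarrow> real"
    and x :: "nat \<Rightarrow> 'a"
    and w z d y :: "nat \<Rightarrow> nat \<Rightarrow> 'a"
    and u :: "nat \<Rightarrow> 'a"
  assumes M: "M \<ge> 1"
    and A1_cont: "\<And>i. i \<in> {1..M} \<Longrightarrow> continuous_on UNIV (f i)"
    and A1_conv: "\<And>i. i \<in> {1..M} \<Longrightarrow> convex_on UNIV (f i)"
    and A2_conv: "\<And>i. i \<in> {1..M} \<Longrightarrow> convex_on UNIV (h i)"
    and A2_grad: "\<And>i p. i \<in> {1..M} \<Longrightarrow> (h i has_derivative (\<lambda>v. inner (gh i p) v)) (at p)"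
    and A2_L: "\<And>i. i \<in> {1..M} \<Longrightarrow> L i > 0"
    and A2_lip: "\<And>i p q. i \<in> {1..M} \<Longrightarrow> norm (gh i p - gh i q) \<le> (1 / L i) * norm (p - q)"
    and A3: "\<And>i. i \<in> {1..M} \<Longrightarrow> firmly_nonexpansive (T i)"
    and dec_\<theta>: "\<And>n. n \<ge> 1 \<Longrightarrow> \<theta> (Suc n) \<le> \<theta> n"
    and dec_lam: "\<And>n. n \<ge> 1 \<Longrightarrow> lam (Suc n) \<le> lam n"
    and dec_\<beta>: "\<And>n. n \<ge> 1 \<Longrightarrow> \<beta> (Suc n) \<le> \<beta> n"
    and lim_lam: "lam \<longlonglongrightarrow> 0"
    and lim_\<beta>: "\<beta> \<longlonglongrightarrow> 0"
    and rng_\<theta>: "\<And>n. n \<ge> 1 \<Longrightarrow> 0 \<le> \<theta> n \<and> \<theta> n < 1"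
    and rng_lam: "\<And>n. n \<ge> 1 \<Longrightarrow> 0 < lam n \<and> lam n \<le> 2 * Min (L ` {1..M})"
    and rng_\<beta>: "\<And>n. n \<ge> 1 \<Longrightarrow> 0 < \<beta> n \<and> \<beta> n \<le> 1"
    and rng_\<alpha>: "\<And>n. n \<ge> 1 \<Longrightarrow> 0 < \<alpha> n \<and> \<alpha> n \<le> 1"
    and C1: "\<not> summable \<alpha>"
    and C2: "(\<lambda>n. (1 / \<alpha> (Suc n)) * \<bar>1 / lam (Suc n) - 1 / lam n\<bar>) \<longlonglongrightarrow> 0"
    and C3: "(\<lambda>n. (1 / lam (Suc n)) * \<bar>1 - \<alpha> n / \<alpha> (Suc n)\<bar>) \<longlonglongrightarrow> 0"
    and C5: "(\<lambda>n. \<theta> n / (\<alpha> (Suc n) * lam (Suc n))) \<longlonglongrightarrow> 0"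
    and C6: "\<exists>\<sigma>\<ge>1. \<forall>n\<ge>1. lam n / lam (Suc n) \<le> \<sigma>"
    and C7: "(\<lambda>n. \<beta> n / \<alpha> (Suc n)) \<longlonglongrightarrow> 0"
    and w_first: "\<And>n. n \<ge> 1 \<Longrightarrow> w 1 n = x n"
    and z_step: "\<And>i n. i \<in> {1..M} \<Longrightarrow> n \<ge> 1 \<Longrightarrow>
                    z i n = w i n + \<theta> n *\<^sub>R (w i n - w i (n - 1))"
    and d_step: "\<And>i n. i \<in> {1..M} \<Longrightarrow> n \<ge> 1 \<Longrightarrow>
                    d i (Suc n) = - gh i (z i n) + \<beta> n *\<^sub>R d i n"
    and y_step: "\<And>i n. i \<in> {1..M} \<Longrightarrow> n \<ge> 1 \<Longrightarrow>
                    y i n = prox (lam n) (f i) (z i n + lam n *\<^sub>R d i (Suc n))"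
    and w_step: "\<And>i n. i \<in> {1..M} \<Longrightarrow> n \<ge> 1 \<Longrightarrow>
                    w (Suc i) n = \<alpha> n *\<^sub>R u i + (1 - \<alpha> n) *\<^sub>R T i (y i n)"
    and x_step: "\<And>n. n \<ge> 1 \<Longrightarrow> x (Suc n) = w (Suc M) n"
    and y_bdd: "\<And>i. i \<in> {1..M} \<Longrightarrow> bounded (y i ` {1..})"
begin

lemma lam_pos: "n \<ge> 1 \<Longrightarrow> 0 < lam n"
  using rng_lam by blast

lemma lam_le_L:
  assumes "i \<in> {1..M}" "n \<ge> 1"
  shows "lam n \<le> 2 * L i"
proof -
  have "Min (L ` {1..M}) \<le> L i"
    using assms(1) by (intro Min_le) auto
  then show ?thesis
    using rng_lam[OF assms(2)] by linarith
qed

lemma y_bounded: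
  obtains K where "0 \<le> K" "\<And>i n. i \<in> {1..M} \<Longrightarrow> n \<ge> 1 \<Longrightarrow> norm (y i n) \<le> K"
proof -
  have "bounded (\<Union>i\<in>{1..M}. y i ` {1..})"
    using y_bdd by auto
  then obtain K where K: "\<And>i n. i \<in> {1..M} \<Longrightarrow> n \<ge> 1 \<Longrightarrow> norm (y i n) \<le> K"
    unfolding bounded_iff by fastforce
  moreover have "0 \<le> K"
    using order_trans[OF norm_ge_zero K[of 1 1]] M by simp
  ultimately show ?thesis
    using that by blast
qed

lemma T_y_bounded:
  obtains K where "0 \<le> K" "\<And>i n. i \<in> {1..M} \<Longrightarrow> n \<ge> 1 \<Longrightarrow> norm (T i (y i n)) \<le> K"
proof -
  obtain Ky where Ky: "0 \<le> Ky" "\<And>i n. i \<in> {1..M} \<Longrightarrow> n \<ge> 1 \<Longrightarrow> norm (y i n) \<le> Ky"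
    using y_bounded by blast
  define K where "K = (\<Sum>i\<in>{1..M}. norm (T i 0)) + Ky"
  have "norm (T i (y i n)) \<le> K" if "i \<in> {1..M}" "n \<ge> 1" for i n
  proof -
    have "norm (T i (y i n)) \<le> norm (T i 0) + norm (T i (y i n) - T i 0)"
      by (rule norm_triangle_sub)
    also have "\<dots> \<le> norm (T i 0) + norm (y i n)"
      using firmly_nonexpansive_imp_nonexpansive[OF A3[OF that(1)], of "y i n" 0] by simp
    also have "\<dots> \<le> K"
      unfolding K_def using that Ky(2)[OF that]
      by (intro add_mono member_le_sum) auto
    finally show ?thesis .
  qed
  moreover have "0 \<le> K"
    using Ky(1) by (simp add: K_def sum_nonneg)
  ultimately show ?thesis
    using that by blast
qed

lemma w_succ_bounded:
  obtains K where "0 \<le> K" "\<And>i n. i \<in> {1..M} \<Longrightarrow> n \<ge> 1 \<Longrightarrow> norm (w (Suc i) n) \<le> K"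
proof -
  obtain KT where KT: "0 \<le> KT" "\<And>i n. i \<in> {1..M} \<Longrightarrow> n \<ge> 1 \<Longrightarrow> norm (T i (y i n)) \<le> KT"
    using T_y_bounded by blast
  define K where "K = (\<Sum>i\<in>{1..M}. norm (u i)) + KT"
  have sum_u: "0 \<le> (\<Sum>i\<in>{1..M}. norm (u i))"
    by (simp add: sum_nonneg)
  have "norm (w (Suc i) n) \<le> K" if "i \<in> {1..M}" "n \<ge> 1" for i n
  proof -
    have a: "0 \<le> \<alpha> n" "\<alpha> n \<le> 1"
      using rng_\<alpha>[OF that(2)] by auto
    have "norm (u i) \<le> (\<Sum>i\<in>{1..M}. norm (u i))"
      using that by (intro member_le_sum) auto
    then have bounds: "norm (u i) \<le> K" "norm (T i (y i n)) \<le> K"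
      using KT(1) KT(2)[OF that] sum_u unfolding K_def by linarith+
    have "norm (w (Suc i) n) \<le> \<alpha> n * norm (u i) + (1 - \<alpha> n) * norm (T i (y i n))"
      using w_step[OF that] norm_triangle_ineq[of "\<alpha> n *\<^sub>R u i" "(1 - \<alpha> n) *\<^sub>R T i (y i n)"] a
      by simp
    also have "\<dots> \<le> \<alpha> n * K + (1 - \<alpha> n) * K"
      using a bounds by (intro add_mono mult_left_mono) auto
    finally show ?thesis
      by (simp add: algebra_simps)
  qed
  moreover have "0 \<le> K"
    using KT(1) sum_u by (simp add: K_def)
  ultimately show ?thesis
    using that by blast
qed

lemma w_bounded:
  obtains K where "0 \<le> K" "\<And>i n. i \<in> {1..Suc M} \<Longrightarrow> norm (w i n) \<le> K"
proof -
  obtain K1 where K1: "0 \<le> K1" "\<And>i n. i \<in> {1..M} \<Longrightarrow> n \<ge> 1 \<Longrightarrow> norm (w (Suc i) n) \<le> K1"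
    using w_succ_bounded by blast
  define K0 where "K0 = (\<Sum>i\<in>{1..Suc M}. norm (w i 0))"
  define K where "K = K1 + norm (x 1) + K0"
  have K0: "norm (w i 0) \<le> K0" if "i \<in> {1..Suc M}" for i
    unfolding K0_def using that by (intro member_le_sum) auto
  have K0_nonneg: "0 \<le> K0"
    unfolding K0_def by (simp add: sum_nonneg)
  have x_bound: "norm (x n) \<le> K1 + norm (x 1)" if "n \<ge> 1" for n
  proof (cases "n = 1")
    case False
    then have "x n = w (Suc M) (n - 1)"
      using x_step[of "n - 1"] that by simp
    moreover have "norm (w (Suc M) (n - 1)) \<le> K1"
      using K1(2)[of M "n - 1"] M False that by simp
    ultimately show ?thesis
      by (simp add: add_increasing2)
  qed (use K1(1) in simp)
  have K_ge: "K1 \<le> K" "K1 + norm (x 1) \<le> K" "K0 \<le> K"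
    using K1(1) K0_nonneg norm_ge_zero[of "x 1"] unfolding K_def by linarith+
  have "norm (w i n) \<le> K" if i: "i \<in> {1..Suc M}" for i n
  proof -
    consider "n = 0" | "n \<ge> 1" "i = 1" | "n \<ge> 1" "i - 1 \<in> {1..M}" "i = Suc (i - 1)"
      using i by fastforce
    then show ?thesis
    proof cases
      case 1
      then show ?thesis
        using K0[OF i] K_ge(3) by simp
    next
      case 2
      then show ?thesis
        using x_bound[of n] w_first[of n] K_ge(2) by simp
    next
      case 3
      then show ?thesis
        using K1(2)[of "i - 1" n] K_ge(1) by simp
    qed
  qed
  moreover have "0 \<le> K"
    using K1(1) K0_nonneg by (simp add: K_def)
  ultimately show ?thesis
    using that by blast
qed

lemma z_bounded:
  obtains K where "0 \<le> K" "\<And>i n. i \<in> {1..M} \<Longrightarrow> n \<ge> 1 \<Longrightarrow> norm (z i n) \<le> K"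
proof -
  obtain Kw where Kw: "0 \<le> Kw" "\<And>i n. i \<in> {1..Suc M} \<Longrightarrow> norm (w i n) \<le> Kw"
    using w_bounded by blast
  have "norm (z i n) \<le> 3 * Kw" if "i \<in> {1..M}" "n \<ge> 1" for i n
  proof -
    have i: "i \<in> {1..Suc M}"
      using that(1) by simp
    have "norm (z i n) \<le> norm (w i n) + \<theta> n * norm (w i n - w i (n - 1))"
      using z_step[OF that] rng_\<theta>[OF that(2)]
        norm_triangle_ineq[of "w i n" "\<theta> n *\<^sub>R (w i n - w i (n - 1))"]
      by simp
    also have "\<dots> \<le> norm (w i n) + \<theta> n * (norm (w i n) + norm (w i (n - 1)))"
      using rng_\<theta>[OF that(2)] by (intro add_left_mono mult_left_mono norm_triangle_ineq4) auto
    also have "\<dots> \<le> Kw + 1 * (Kw + Kw)"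
      using Kw(2)[OF i] rng_\<theta>[OF that(2)] Kw(1) by (intro add_mono mult_mono) auto
    finally show ?thesis
      by simp
  qed
  with Kw(1) that show ?thesis
    by (meson mult_nonneg_nonneg zero_le_numeral)
qed

lemma grad_bounded:
  obtains K where "0 \<le> K" "\<And>i n. i \<in> {1..M} \<Longrightarrow> n \<ge> 1 \<Longrightarrow> norm (gh i (z i n)) \<le> K"
proof -
  obtain Kz where Kz: "0 \<le> Kz" "\<And>i n. i \<in> {1..M} \<Longrightarrow> n \<ge> 1 \<Longrightarrow> norm (z i n) \<le> Kz"
    using z_bounded by blast
  define K where "K = (\<Sum>i\<in>{1..M}. norm (gh i 0) + Kz / L i)"
  have "norm (gh i (z i n)) \<le> K" if "i \<in> {1..M}" "n \<ge> 1" for i n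
  proof -
    have "norm (gh i (z i n)) \<le> norm (gh i 0) + norm (gh i (z i n) - gh i 0)"
      by (rule norm_triangle_sub)
    also have "\<dots> \<le> norm (gh i 0) + Kz / L i"
      using A2_lip[OF that(1), of "z i n" 0] Kz(2)[OF that] A2_L[OF that(1)]
      by (simp add: divide_right_mono order_trans)
    also have "\<dots> \<le> K"
      unfolding K_def using that(1) Kz(1) A2_L
      by (intro member_le_sum[where f = "\<lambda>i. norm (gh i 0) + Kz / L i"])
        (auto intro!: add_nonneg_nonneg divide_nonneg_pos)
    finally show ?thesis .
  qed
  moreover have "0 \<le> K"
    unfolding K_def using Kz(1) A2_L by (auto intro!: sum_nonneg add_nonneg_nonneg divide_nonneg_pos)
  ultimately show ?thesis
    using that by blast
qed

lemma d_bounded: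
  obtains K where "0 \<le> K" "\<And>i n. i \<in> {1..M} \<Longrightarrow> norm (d i n) \<le> K"
proof -
  obtain Kg where Kg: "0 \<le> Kg" "\<And>i n. i \<in> {1..M} \<Longrightarrow> n \<ge> 1 \<Longrightarrow> norm (gh i (z i n)) \<le> Kg"
    using grad_bounded by blast
  obtain N where N: "\<And>n. n \<ge> N \<Longrightarrow> \<beta> n < 1 / 2"
    using order_tendstoD(2)[OF lim_\<beta>, of "1 / 2"] by (auto simp: eventually_sequentially)
  define r where "r n = (\<Sum>i\<in>{1..M}. norm (d i n))" for n
  have "norm (d i (Suc m)) \<le> Kg + norm (d i m) / 2" if i: "i \<in> {1..M}" and m: "m \<ge> max 1 N" for i m
  proof -
    have "norm (d i (Suc m)) \<le> norm (gh i (z i m)) + \<beta> m * norm (d i m)"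
      using d_step[OF i] rng_\<beta>[of m] m norm_triangle_ineq[of "- gh i (z i m)" "\<beta> m *\<^sub>R d i m"]
      by simp
    also have "\<dots> \<le> Kg + 1 / 2 * norm (d i m)"
      using Kg(2)[OF i] N[of m] m by (intro add_mono mult_right_mono) auto
    finally show ?thesis
      by simp
  qed
  then have "r (Suc m) \<le> M * Kg + r m / 2" if "m \<ge> max 1 N" for m
    using sum_mono[of "{1..M}" "\<lambda>i. norm (d i (Suc m))" "\<lambda>i. Kg + norm (d i m) / 2"] that
    by (simp add: r_def sum.distrib sum_divide_distrib)
  then obtain K where K: "\<And>n. r n \<le> K"
    using halving_recursion_bounded by blast
  have "norm (d i n) \<le> K" if "i \<in> {1..M}" for i n
    using member_le_sum[of i "{1..M}" "\<lambda>i. norm (d i n)"] K[of n] that by (simp add: r_def)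
  moreover have "0 \<le> K"
    using K[of 0] sum_nonneg[of "{1..M}" "\<lambda>i. norm (d i 0)"] by (simp add: r_def)
  ultimately show ?thesis
    using that by blast
qed

lemma iterates_bounded:
  obtains K where "0 \<le> K"
    and "\<And>i n. i \<in> {1..Suc M} \<Longrightarrow> norm (w i n) \<le> K"
    and "\<And>i n. i \<in> {1..M} \<Longrightarrow> n \<ge> 1 \<Longrightarrow> norm (y i n) \<le> K"
    and "\<And>i n. i \<in> {1..M} \<Longrightarrow> n \<ge> 1 \<Longrightarrow> norm (z i n) \<le> K"
    and "\<And>i n. i \<in> {1..M} \<Longrightarrow> n \<ge> 1 \<Longrightarrow> norm (gh i (z i n)) \<le> K"
    and "\<And>i n. i \<in> {1..M} \<Longrightarrow> norm (d i n) \<le> K"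
    and "\<And>i n. i \<in> {1..M} \<Longrightarrow> n \<ge> 1 \<Longrightarrow> norm (u i - T i (y i n)) \<le> K"
proof -
  obtain Kw where Kw: "0 \<le> Kw" "\<And>i n. i \<in> {1..Suc M} \<Longrightarrow> norm (w i n) \<le> Kw"
    using w_bounded by blast
  obtain Ky where Ky: "0 \<le> Ky" "\<And>i n. i \<in> {1..M} \<Longrightarrow> n \<ge> 1 \<Longrightarrow> norm (y i n) \<le> Ky"
    using y_bounded by blast
  obtain Kz where Kz: "0 \<le> Kz" "\<And>i n. i \<in> {1..M} \<Longrightarrow> n \<ge> 1 \<Longrightarrow> norm (z i n) \<le> Kz"
    using z_bounded by blast
  obtain Kg where Kg: "0 \<le> Kg" "\<And>i n. i \<in> {1..M} \<Longrightarrow> n \<ge> 1 \<Longrightarrow> norm (gh i (z i n)) \<le> Kg"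
    using grad_bounded by blast
  obtain Kd where Kd: "0 \<le> Kd" "\<And>i n. i \<in> {1..M} \<Longrightarrow> norm (d i n) \<le> Kd"
    using d_bounded by blast
  obtain KT where KT: "0 \<le> KT" "\<And>i n. i \<in> {1..M} \<Longrightarrow> n \<ge> 1 \<Longrightarrow> norm (T i (y i n)) \<le> KT"
    using T_y_bounded by blast
  define Ku where "Ku = (\<Sum>i\<in>{1..M}. norm (u i))"
  have Ku: "norm (u i) \<le> Ku" if "i \<in> {1..M}" for i
    unfolding Ku_def using that by (intro member_le_sum) auto
  have "norm (u i - T i (y i n)) \<le> Ku + KT" if "i \<in> {1..M}" "n \<ge> 1" for i n
    using norm_triangle_ineq4[of "u i" "T i (y i n)"] Ku[OF that(1)] KT(2)[OF that] by simp
  moreover have "0 \<le> Ku"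
    unfolding Ku_def by (simp add: sum_nonneg)
  ultimately show ?thesis
    using that[of "Kw + Ky + Kz + Kg + Kd + (Ku + KT)"] Kw Ky Kz Kg Kd KT
    by (smt (verit))
qed

lemma w_succ_dist_sq:
  assumes i: "i \<in> {1..M}" and n: "n \<ge> 1" and q: "T i q = q"
  shows "(norm (w (Suc i) n - q))\<^sup>2 \<le> \<alpha> n * (norm (u i - q))\<^sup>2 + (norm (y i n - q))\<^sup>2
    - (1 - \<alpha> n) * (norm (T i (y i n) - y i n))\<^sup>2"
proof -
  have a: "0 \<le> \<alpha> n" "\<alpha> n \<le> 1"
    using rng_\<alpha>[OF n] by auto
  have "w (Suc i) n - q = \<alpha> n *\<^sub>R (u i - q) + (1 - \<alpha> n) *\<^sub>R (T i (y i n) - q)"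
    using w_step[OF i n] by (simp add: algebra_simps)
  then have "(norm (w (Suc i) n - q))\<^sup>2 \<le> \<alpha> n * (norm (u i - q))\<^sup>2 + (1 - \<alpha> n) * (norm (T i (y i n) - q))\<^sup>2"
    using norm_convex_comb_square[of "\<alpha> n" "u i - q" "T i (y i n) - q"] a by simp
  also have "(1 - \<alpha> n) * (norm (T i (y i n) - q))\<^sup>2
      \<le> (1 - \<alpha> n) * ((norm (y i n - q))\<^sup>2 - (norm (T i (y i n) - y i n))\<^sup>2)"
    using firmly_nonexpansive_fixpoint_ineq[OF A3[OF i] q] a by (intro mult_left_mono) auto
  also have "\<dots> \<le> (norm (y i n - q))\<^sup>2 - (1 - \<alpha> n) * (norm (T i (y i n) - y i n))\<^sup>2"
    using a by (simp add: algebra_simps)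
  finally show ?thesis
    by simp
qed

lemma y_dist_sq:
  assumes "i \<in> {1..M}" "n \<ge> 1"
  shows "(norm (y i n - q))\<^sup>2 \<le> (norm (z i n - q))\<^sup>2 - (norm (z i n - y i n))\<^sup>2
    + 2 * lam n * (f i q - f i (y i n)) + 2 * lam n * inner (d i (Suc n)) (y i n - q)"
  by (rule prox_three_point_ineq[OF A1_cont A1_conv lam_pos y_step]) (use assms in auto)

lemma z_dist_sq:
  obtains Q where "0 \<le> Q"
    "\<And>i n. i \<in> {1..M} \<Longrightarrow> n \<ge> 1 \<Longrightarrow> (norm (z i n - q))\<^sup>2 \<le> (norm (w i n - q))\<^sup>2 + \<theta> n * Q"
proof -
  obtain K where K: "0 \<le> K" "\<And>i n. i \<in> {1..Suc M} \<Longrightarrow> norm (w i n) \<le> K"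
    using w_bounded by blast
  define Q where "Q = 2 * (K + norm q) * (2 * K) + (2 * K)\<^sup>2"
  have "(norm (z i n - q))\<^sup>2 \<le> (norm (w i n - q))\<^sup>2 + \<theta> n * Q" if i: "i \<in> {1..M}" and n: "n \<ge> 1" for i n
  proof -
    define X where "X = w i n - q"
    define Y where "Y = w i n - w i (n - 1)"
    have th: "0 \<le> \<theta> n" "\<theta> n \<le> 1"
      using rng_\<theta>[OF n] by auto
    have X: "norm X \<le> K + norm q"
      unfolding X_def using norm_triangle_ineq4[of "w i n" q] K(2)[of i n] i by simp
    have Y: "norm Y \<le> 2 * K"
      unfolding Y_def using norm_triangle_ineq4[of "w i n" "w i (n - 1)"] K(2)[of i n] K(2)[of i "n - 1"] i
      by simp
    have "2 * \<theta> n * inner X Y \<le> 2 * \<theta> n * (norm X * norm Y)"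
      using th by (intro mult_left_mono norm_cauchy_schwarz) auto
    also have "\<dots> \<le> 2 * \<theta> n * ((K + norm q) * (2 * K))"
      using th X Y K(1) by (intro mult_left_mono mult_mono) auto
    finally have cross: "2 * \<theta> n * inner X Y \<le> 2 * \<theta> n * ((K + norm q) * (2 * K))" .
    have "(\<theta> n)\<^sup>2 * (norm Y)\<^sup>2 \<le> \<theta> n * (2 * K)\<^sup>2"
      using th Y by (intro mult_mono power_mono) (auto simp: power2_eq_square mult_left_le_one_le)
    moreover have "z i n - q = X + \<theta> n *\<^sub>R Y"
      using z_step[OF i n] by (simp add: X_def Y_def algebra_simps)
    ultimately show ?thesis
      using cross norm_add_scaleR_square[of X "\<theta> n" Y] by (simp add: Q_def X_def algebra_simps)
  qed
  moreover have "0 \<le> Q"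
    using K(1) by (simp add: Q_def)
  ultimately show ?thesis
    using that by blast
qed

theorem fejer_type_ineq:
  assumes i: "i \<in> {1..M}" and q: "T i q = q"
  shows "\<exists>Q1\<ge>0. \<exists>Q2\<ge>0. \<forall>n\<ge>1.
            (norm (w (Suc i) n - q))\<^sup>2
              \<le> (norm (w i n - q))\<^sup>2 + \<theta> n * Q1 + \<alpha> n * Q2
                 - (1 - \<alpha> n) * (norm (T i (y i n) - y i n))\<^sup>2
                 - (norm (z i n - y i n))\<^sup>2
                 + 2 * lam n * (f i q - f i (y i n))
                 + 2 * lam n * inner (d i (Suc n)) (y i n - q)"
proof -
  obtain Q1 where Q1: "0 \<le> Q1"
    "\<And>n. n \<ge> 1 \<Longrightarrow> (norm (z i n - q))\<^sup>2 \<le> (norm (w i n - q))\<^sup>2 + \<theta> n * Q1"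
    using z_dist_sq[of q] i by metis
  have "(norm (w (Suc i) n - q))\<^sup>2
      \<le> (norm (w i n - q))\<^sup>2 + \<theta> n * Q1 + \<alpha> n * (norm (u i - q))\<^sup>2
         - (1 - \<alpha> n) * (norm (T i (y i n) - y i n))\<^sup>2
         - (norm (z i n - y i n))\<^sup>2
         + 2 * lam n * (f i q - f i (y i n))
         + 2 * lam n * inner (d i (Suc n)) (y i n - q)" if n: "n \<ge> 1" for n
    using Q1(2)[OF n] w_succ_dist_sq[OF i n q] y_dist_sq[OF i n, of q] by linarith
  then show ?thesis
    using Q1(1) by (intro exI[of _ Q1] conjI exI[of _ "(norm (u i - q))\<^sup>2"]) auto
qed

lemma z_diff_le:
  obtains K where "0 \<le> K" "\<And>i n. i \<in> {1..M} \<Longrightarrow> n \<ge> 1 \<Longrightarrow>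
    norm (z i (Suc n) - z i n) \<le> norm (w i (Suc n) - w i n) + K * \<theta> n"
proof -
  obtain Kw where Kw: "0 \<le> Kw" "\<And>i n. i \<in> {1..Suc M} \<Longrightarrow> norm (w i n) \<le> Kw"
    using w_bounded by blast
  have w_diff: "norm (w i m - w i k) \<le> 2 * Kw" if "i \<in> {1..M}" for i m k
    using norm_triangle_ineq4[of "w i m" "w i k"] Kw(2)[of i m] Kw(2)[of i k] that by simp
  have "norm (z i (Suc n) - z i n) \<le> norm (w i (Suc n) - w i n) + 4 * Kw * \<theta> n"
    if i: "i \<in> {1..M}" and n: "n \<ge> 1" for i n
  proof -
    have th: "0 \<le> \<theta> (Suc n)" "\<theta> (Suc n) \<le> \<theta> n" "0 \<le> \<theta> n"
      using rng_\<theta>[of "Suc n"] rng_\<theta>[OF n] dec_\<theta>[OF n] by auto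
    have "z i (Suc n) - z i n = (w i (Suc n) - w i n)
        + (\<theta> (Suc n) *\<^sub>R (w i (Suc n) - w i n) - \<theta> n *\<^sub>R (w i n - w i (n - 1)))"
      using z_step[OF i n] z_step[OF i, of "Suc n"] by (simp add: algebra_simps)
    then have "norm (z i (Suc n) - z i n) \<le> norm (w i (Suc n) - w i n)
        + (\<theta> (Suc n) * norm (w i (Suc n) - w i n) + \<theta> n * norm (w i n - w i (n - 1)))"
      using norm_triangle_ineq[of "w i (Suc n) - w i n"] norm_triangle_ineq4 th
      by (smt (verit) norm_scaleR abs_of_nonneg)
    also have "\<dots> \<le> norm (w i (Suc n) - w i n) + (\<theta> n * (2 * Kw) + \<theta> n * (2 * Kw))"
      using th w_diff[OF i] Kw(1) by (intro add_left_mono add_mono mult_mono) auto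
    finally show ?thesis
      by (simp add: algebra_simps)
  qed
  with Kw(1) that show ?thesis
    by (meson mult_nonneg_nonneg zero_le_numeral)
qed

definition prox_arg :: "nat \<Rightarrow> nat \<Rightarrow> 'a" where
  "prox_arg i n = z i n + lam n *\<^sub>R d i (Suc n)"

lemma prox_arg_eq:
  assumes "i \<in> {1..M}" "n \<ge> 1"
  shows "prox_arg i n = (z i n - lam n *\<^sub>R gh i (z i n)) + (lam n * \<beta> n) *\<^sub>R d i n"
  unfolding prox_arg_def d_step[OF assms] by (simp add: algebra_simps)

lemma lam_beta_antimono:
  assumes "n \<ge> 1"
  shows "0 \<le> lam (Suc n) * \<beta> (Suc n)" "lam (Suc n) * \<beta> (Suc n) \<le> lam n * \<beta> n"
  using rng_\<beta>[OF assms] rng_\<beta>[of "Suc n"] dec_\<beta>[OF assms] dec_lam[OF assms] lam_pos[of "Suc n"]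
  by (auto intro: mult_mono)

lemma lam_diff_le:
  assumes "n \<ge> 1"
  shows "\<bar>lam n - lam (Suc n)\<bar> \<le> 2 * Min (L ` {1..M}) * \<bar>lam n / lam (Suc n) - 1\<bar>"
proof -
  have "\<bar>lam n - lam (Suc n)\<bar> = lam (Suc n) * \<bar>lam n / lam (Suc n) - 1\<bar>"
    using lam_pos[of "Suc n"] by (simp add: abs_mult_pos' field_simps flip: abs_mult)
  also have "\<dots> \<le> 2 * Min (L ` {1..M}) * \<bar>lam n / lam (Suc n) - 1\<bar>"
    using rng_lam[of "Suc n"] by (intro mult_right_mono) auto
  finally show ?thesis .
qed

lemma prox_arg_diff_le:
  obtains K where "0 \<le> K" "\<And>i n. i \<in> {1..M} \<Longrightarrow> n \<ge> 1 \<Longrightarrow>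
    norm (prox_arg i (Suc n) - prox_arg i n)
      \<le> norm (z i (Suc n) - z i n) + K * (\<bar>lam n / lam (Suc n) - 1\<bar> + lam n * \<beta> n)"
proof -
  obtain K0 where K0: "0 \<le> K0"
    "\<And>i n. i \<in> {1..M} \<Longrightarrow> n \<ge> 1 \<Longrightarrow> norm (gh i (z i n)) \<le> K0"
    "\<And>i n. i \<in> {1..M} \<Longrightarrow> norm (d i n) \<le> K0"
    using iterates_bounded by metis
  define \<Lambda> where "\<Lambda> = 2 * Min (L ` {1..M})"
  have "0 \<le> \<Lambda>"
    using rng_lam[of 1] by (simp add: \<Lambda>_def)
  have "norm (prox_arg i (Suc n) - prox_arg i n)
      \<le> norm (z i (Suc n) - z i n) + (\<Lambda> * K0 + 2 * K0) * (\<bar>lam n / lam (Suc n) - 1\<bar> + lam n * \<beta> n)"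
    if i: "i \<in> {1..M}" and n: "n \<ge> 1" for i n
  proof -
    let ?l = "lam n" and ?l' = "lam (Suc n)" and ?g = "gh i (z i n)" and ?g' = "gh i (z i (Suc n))"
    have "prox_arg i (Suc n) - prox_arg i n = ((z i (Suc n) - ?l' *\<^sub>R ?g') - (z i n - ?l' *\<^sub>R ?g))
        + ((?l - ?l') *\<^sub>R ?g + ((?l' * \<beta> (Suc n)) *\<^sub>R d i (Suc n) - (?l * \<beta> n) *\<^sub>R d i n))"
      unfolding prox_arg_eq[OF i n] prox_arg_eq[OF i le_SucI[OF n]] by (simp add: algebra_simps)
    then have "norm (prox_arg i (Suc n) - prox_arg i n)
        \<le> norm ((z i (Suc n) - ?l' *\<^sub>R ?g') - (z i n - ?l' *\<^sub>R ?g))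
          + (\<bar>?l - ?l'\<bar> * norm ?g + (?l' * \<beta> (Suc n) * norm (d i (Suc n)) + ?l * \<beta> n * norm (d i n)))"
      using lam_beta_antimono[OF n] norm_triangle_ineq norm_triangle_ineq4
      by (smt (verit) norm_scaleR abs_of_nonneg)
    also have "\<dots> \<le> norm (z i (Suc n) - z i n)
        + (\<Lambda> * \<bar>?l / ?l' - 1\<bar> * K0 + (?l * \<beta> n * K0 + ?l * \<beta> n * K0))"
    proof (intro add_mono)
      show "norm ((z i (Suc n) - ?l' *\<^sub>R ?g') - (z i n - ?l' *\<^sub>R ?g)) \<le> norm (z i (Suc n) - z i n)"
        using gradient_step_nonexpansive[OF A2_conv[OF i] A2_grad[OF i] A2_L[OF i] A2_lip[OF i]]
          lam_pos[of "Suc n"] lam_le_L[OF i, of "Suc n"] by simp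
      show "\<bar>?l - ?l'\<bar> * norm ?g \<le> \<Lambda> * \<bar>?l / ?l' - 1\<bar> * K0"
        using lam_diff_le[OF n] K0(1) K0(2)[OF i n] unfolding \<Lambda>_def by (intro mult_mono) auto
      show "?l' * \<beta> (Suc n) * norm (d i (Suc n)) \<le> ?l * \<beta> n * K0" "?l * \<beta> n * norm (d i n) \<le> ?l * \<beta> n * K0"
        using lam_beta_antimono[OF n] K0(1) K0(3)[OF i] by (auto intro: mult_mono)
    qed
    moreover have "0 \<le> \<Lambda> * K0 * (?l * \<beta> n)" "0 \<le> 2 * K0 * \<bar>?l / ?l' - 1\<bar>"
      using \<open>0 \<le> \<Lambda>\<close> K0(1) lam_pos[OF n] rng_\<beta>[OF n] by simp_all
    ultimately show ?thesis
      by (simp add: algebra_simps)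
  qed
  moreover have "0 \<le> \<Lambda> * K0 + 2 * K0"
    using \<open>0 \<le> \<Lambda>\<close> K0(1) by simp
  ultimately show ?thesis
    using that by blast
qed

lemma prox_arg_residual_bounded:
  obtains K where "0 \<le> K" "\<And>i n. i \<in> {1..M} \<Longrightarrow> n \<ge> 1 \<Longrightarrow> norm (prox_arg i n - y i n) \<le> K"
proof -
  obtain K0 where K0: "0 \<le> K0"
    "\<And>i n. i \<in> {1..M} \<Longrightarrow> n \<ge> 1 \<Longrightarrow> norm (y i n) \<le> K0"
    "\<And>i n. i \<in> {1..M} \<Longrightarrow> n \<ge> 1 \<Longrightarrow> norm (z i n) \<le> K0"
    "\<And>i n. i \<in> {1..M} \<Longrightarrow> norm (d i n) \<le> K0"
    using iterates_bounded by metis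
  define \<Lambda> where "\<Lambda> = 2 * Min (L ` {1..M})"
  have "norm (prox_arg i n - y i n) \<le> K0 + \<Lambda> * K0 + K0" if i: "i \<in> {1..M}" and n: "n \<ge> 1" for i n
  proof -
    have "norm (lam n *\<^sub>R d i (Suc n)) \<le> \<Lambda> * K0"
      using rng_lam[OF n] K0(1) K0(4)[OF i] by (auto simp: \<Lambda>_def intro: mult_mono)
    then show ?thesis
      unfolding prox_arg_def using K0(2,3)[OF i n] norm_triangle_ineq4 norm_triangle_ineq
      by (smt (verit))
  qed
  moreover have "0 \<le> K0 + \<Lambda> * K0 + K0"
    using rng_lam[of 1] K0(1) by (simp add: \<Lambda>_def)
  ultimately show ?thesis
    using that by blast
qed

lemma y_diff_le:
  obtains K where "0 \<le> K" "\<And>i n. i \<in> {1..M} \<Longrightarrow> n \<ge> 1 \<Longrightarrow>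
    norm (y i (Suc n) - y i n)
      \<le> norm (w i (Suc n) - w i n) + K * (\<theta> n + \<bar>lam n / lam (Suc n) - 1\<bar> + lam n * \<beta> n)"
proof -
  obtain Kz where Kz: "0 \<le> Kz" "\<And>i n. i \<in> {1..M} \<Longrightarrow> n \<ge> 1 \<Longrightarrow>
      norm (z i (Suc n) - z i n) \<le> norm (w i (Suc n) - w i n) + Kz * \<theta> n"
    using z_diff_le by blast
  obtain KA where KA: "0 \<le> KA" "\<And>i n. i \<in> {1..M} \<Longrightarrow> n \<ge> 1 \<Longrightarrow>
      norm (prox_arg i (Suc n) - prox_arg i n)
        \<le> norm (z i (Suc n) - z i n) + KA * (\<bar>lam n / lam (Suc n) - 1\<bar> + lam n * \<beta> n)"
    using prox_arg_diff_le by blast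
  obtain Kr where Kr: "0 \<le> Kr" "\<And>i n. i \<in> {1..M} \<Longrightarrow> n \<ge> 1 \<Longrightarrow> norm (prox_arg i n - y i n) \<le> Kr"
    using prox_arg_residual_bounded by blast
  have "norm (y i (Suc n) - y i n)
      \<le> norm (w i (Suc n) - w i n) + (Kz + KA + Kr) * (\<theta> n + \<bar>lam n / lam (Suc n) - 1\<bar> + lam n * \<beta> n)"
    if i: "i \<in> {1..M}" and n: "n \<ge> 1" for i n
  proof -
    let ?r = "\<bar>lam n / lam (Suc n) - 1\<bar>"
    have n': "Suc n \<ge> 1"
      by simp
    have nonneg: "0 \<le> \<theta> n" "0 \<le> ?r" "0 \<le> lam n * \<beta> n"
      using rng_\<theta>[OF n] rng_lam[OF n] rng_\<beta>[OF n] by auto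
    have y_prox: "y i m = prox (lam m) (f i) (prox_arg i m)" if "m \<ge> 1" for m
      using y_step[OF i that] by (simp add: prox_arg_def)
    have "norm (y i (Suc n) - y i n) \<le> norm (prox_arg i (Suc n) - prox_arg i n) + ?r * Kr"
      using prox_dist_le[OF A1_cont[OF i] A1_conv[OF i] lam_pos[OF n'] lam_pos[OF n],
          of "prox_arg i (Suc n)" "prox_arg i n"] mult_left_mono[OF Kr(2)[OF i n'] nonneg(2)]
      unfolding y_prox[OF n] y_prox[OF n'] by linarith
    also have "\<dots> \<le> norm (w i (Suc n) - w i n) + Kz * \<theta> n + KA * (?r + lam n * \<beta> n) + ?r * Kr"
      using KA(2)[OF i n] Kz(2)[OF i n] by simp
    also have "\<dots> \<le> norm (w i (Suc n) - w i n) + (Kz + KA + Kr) * (\<theta> n + ?r + lam n * \<beta> n)"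
      using nonneg Kz(1) KA(1) Kr(1) by (simp add: algebra_simps add_mono mult_left_mono)
    finally show ?thesis .
  qed
  moreover have "0 \<le> Kz + KA + Kr"
    using Kz(1) KA(1) Kr(1) by simp
  ultimately show ?thesis
    using that by blast
qed

text \<open>
  The summands are the contributions of the anchor weight, the step size, the inertial term and
  the momentum term to the difference between steps \<open>n\<close> and \<open>n + 1\<close>.
\<close>
definition perturbation :: "nat \<Rightarrow> real" where
  "perturbation n = \<bar>\<alpha> (Suc n) - \<alpha> n\<bar> + \<bar>lam n / lam (Suc n) - 1\<bar> + \<theta> n + lam n * \<beta> n"

lemma w_succ_diff_le:
  assumes i: "i \<in> {1..M}" and n: "n \<ge> 1"
  shows "norm (w (Suc i) (Suc n) - w (Suc i) n)
    \<le> \<bar>\<alpha> (Suc n) - \<alpha> n\<bar> * norm (u i - T i (y i n)) + (1 - \<alpha> (Suc n)) * norm (y i (Suc n) - y i n)"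
proof -
  have a: "0 \<le> 1 - \<alpha> (Suc n)"
    using rng_\<alpha>[of "Suc n"] by simp
  have "w (Suc i) (Suc n) - w (Suc i) n = (\<alpha> (Suc n) - \<alpha> n) *\<^sub>R (u i - T i (y i n))
      + (1 - \<alpha> (Suc n)) *\<^sub>R (T i (y i (Suc n)) - T i (y i n))"
    using w_step[OF i n] w_step[OF i le_SucI[OF n]] by (simp add: algebra_simps)
  then have "norm (w (Suc i) (Suc n) - w (Suc i) n) \<le> \<bar>\<alpha> (Suc n) - \<alpha> n\<bar> * norm (u i - T i (y i n))
      + (1 - \<alpha> (Suc n)) * norm (T i (y i (Suc n)) - T i (y i n))"
    using norm_triangle_ineq a by (smt (verit) norm_scaleR abs_of_nonneg)
  also have "norm (T i (y i (Suc n)) - T i (y i n)) \<le> norm (y i (Suc n) - y i n)"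
    by (rule firmly_nonexpansive_imp_nonexpansive[OF A3[OF i]])
  finally show ?thesis
    using a by (simp add: mult_left_mono)
qed

lemma w_diff_recursion:
  obtains K where "0 \<le> K" "\<And>i n. i \<in> {1..M} \<Longrightarrow> n \<ge> 1 \<Longrightarrow>
    norm (w (Suc i) (Suc n) - w (Suc i) n)
      \<le> (1 - \<alpha> (Suc n)) * norm (w i (Suc n) - w i n) + K * perturbation n"
proof -
  obtain K0 where K0: "0 \<le> K0"
    "\<And>i n. i \<in> {1..M} \<Longrightarrow> n \<ge> 1 \<Longrightarrow> norm (u i - T i (y i n)) \<le> K0"
    using iterates_bounded by metis
  obtain Ky where Ky: "0 \<le> Ky" "\<And>i n. i \<in> {1..M} \<Longrightarrow> n \<ge> 1 \<Longrightarrow>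
      norm (y i (Suc n) - y i n)
        \<le> norm (w i (Suc n) - w i n) + Ky * (\<theta> n + \<bar>lam n / lam (Suc n) - 1\<bar> + lam n * \<beta> n)"
    using y_diff_le by blast
  have "norm (w (Suc i) (Suc n) - w (Suc i) n)
      \<le> (1 - \<alpha> (Suc n)) * norm (w i (Suc n) - w i n) + (K0 + Ky) * perturbation n"
    if i: "i \<in> {1..M}" and n: "n \<ge> 1" for i n
  proof -
    let ?a = "\<bar>\<alpha> (Suc n) - \<alpha> n\<bar>" and ?s = "\<theta> n + \<bar>lam n / lam (Suc n) - 1\<bar> + lam n * \<beta> n"
    have a': "0 \<le> 1 - \<alpha> (Suc n)" "1 - \<alpha> (Suc n) \<le> 1"
      using rng_\<alpha>[of "Suc n"] by auto
    have s: "0 \<le> ?s"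
      using rng_\<theta>[OF n] rng_lam[OF n] rng_\<beta>[OF n] by simp
    have "(1 - \<alpha> (Suc n)) * norm (y i (Suc n) - y i n)
        \<le> (1 - \<alpha> (Suc n)) * (norm (w i (Suc n) - w i n) + Ky * ?s)"
      using Ky(2)[OF i n] a'(1) by (rule mult_left_mono)
    moreover have "(1 - \<alpha> (Suc n)) * (Ky * ?s) \<le> Ky * ?s"
      using a' Ky(1) s by (simp add: mult_left_le_one_le)
    moreover have "?a * norm (u i - T i (y i n)) \<le> ?a * K0"
      using K0(2)[OF i n] by (simp add: mult_left_mono)
    moreover have "(K0 + Ky) * perturbation n = ?a * K0 + K0 * ?s + Ky * ?a + Ky * ?s"
      by (simp add: perturbation_def algebra_simps)
    moreover have "0 \<le> K0 * ?s" "0 \<le> Ky * ?a"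
      using K0(1) Ky(1) s by simp_all
    ultimately show ?thesis
      using w_succ_diff_le[OF i n] by (simp only: distrib_left)
  qed
  moreover have "0 \<le> K0 + Ky"
    using K0(1) Ky(1) by simp
  ultimately show ?thesis
    using that by blast
qed

lemma x_diff_recursion:
  obtains K where "0 \<le> K" "\<And>n. n \<ge> 1 \<Longrightarrow>
    norm (x (Suc (Suc n)) - x (Suc n)) \<le> (1 - \<alpha> (Suc n)) * norm (x (Suc n) - x n) + K * perturbation n"
proof -
  obtain K where K: "0 \<le> K" "\<And>i n. i \<in> {1..M} \<Longrightarrow> n \<ge> 1 \<Longrightarrow>
      norm (w (Suc i) (Suc n) - w (Suc i) n)
        \<le> (1 - \<alpha> (Suc n)) * norm (w i (Suc n) - w i n) + K * perturbation n"
    using w_diff_recursion by blast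
  have "norm (x (Suc (Suc n)) - x (Suc n)) \<le> (1 - \<alpha> (Suc n)) * norm (x (Suc n) - x n) + (M * K) * perturbation n"
    if n: "n \<ge> 1" for n
  proof -
    have "0 \<le> perturbation n"
      using rng_\<theta>[OF n] rng_lam[OF n] rng_\<beta>[OF n] by (simp add: perturbation_def)
    then have "norm (w (Suc M) (Suc n) - w (Suc M) n)
        \<le> (1 - \<alpha> (Suc n)) * norm (w 1 (Suc n) - w 1 n) + M * (K * perturbation n)"
      using rng_\<alpha>[of "Suc n"] K(1) K(2)[OF _ n] M
      by (intro iterated_perturbed_contraction[where e = "\<lambda>i. norm (w i (Suc n) - w i n)"]) simp_all
    then show ?thesis
      using x_step[OF n] x_step[OF le_SucI[OF n]] w_first[OF n] w_first[OF le_SucI[OF n]]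
      by (simp add: mult.assoc)
  qed
  with K(1) that show ?thesis
    by (meson mult_nonneg_nonneg of_nat_0_le_iff)
qed

definition rate :: "nat \<Rightarrow> real" where
  "rate n = (1 / \<alpha> (Suc n)) * \<bar>1 / lam (Suc n) - 1 / lam n\<bar> + (1 / lam (Suc n)) * \<bar>1 - \<alpha> n / \<alpha> (Suc n)\<bar>
    + \<theta> n / (\<alpha> (Suc n) * lam (Suc n)) + \<beta> n / \<alpha> (Suc n)"

lemma rate_tendsto_zero: "rate \<longlonglongrightarrow> 0"
  using tendsto_add[OF tendsto_add[OF tendsto_add[OF C2 C3] C5] C7] by (simp add: rate_def[abs_def])

lemma rate_terms_nonneg:
  assumes "n \<ge> 1"
  shows "0 \<le> (1 / lam (Suc n)) * \<bar>1 - \<alpha> n / \<alpha> (Suc n)\<bar>" "0 \<le> \<theta> n / (\<alpha> (Suc n) * lam (Suc n))"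
    "0 \<le> \<beta> n / \<alpha> (Suc n)" "0 \<le> (1 / \<alpha> (Suc n)) * \<bar>1 / lam (Suc n) - 1 / lam n\<bar>"
  using rng_\<alpha>[of "Suc n"] rng_lam[of "Suc n"] rng_\<theta>[OF assms] rng_\<beta>[OF assms] by auto

lemma inv_lam_diff_le_rate:
  assumes "n \<ge> 1"
  shows "\<bar>1 / lam (Suc n) - 1 / lam n\<bar> \<le> \<alpha> (Suc n) * rate n"
proof -
  have "\<bar>1 / lam (Suc n) - 1 / lam n\<bar> = \<alpha> (Suc n) * ((1 / \<alpha> (Suc n)) * \<bar>1 / lam (Suc n) - 1 / lam n\<bar>)"
    using rng_\<alpha>[of "Suc n"] by simp
  also have "\<dots> \<le> \<alpha> (Suc n) * rate n"
    using rate_terms_nonneg[OF assms] rng_\<alpha>[of "Suc n"] by (intro mult_left_mono) (auto simp: rate_def)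
  finally show ?thesis .
qed

lemma perturbation_le_rate:
  obtains \<sigma> where "\<And>n. n \<ge> 1 \<Longrightarrow> perturbation n \<le> \<sigma> * (lam (Suc n) * \<alpha> (Suc n) * rate n)"
proof -
  obtain \<sigma> where \<sigma>: "\<sigma> \<ge> 1" "\<And>n. n \<ge> 1 \<Longrightarrow> lam n / lam (Suc n) \<le> \<sigma>"
    using C6 by blast
  have "perturbation n \<le> \<sigma> * (lam (Suc n) * \<alpha> (Suc n) * rate n)" if n: "n \<ge> 1" for n
  proof -
    define D where "D = lam (Suc n) * \<alpha> (Suc n)"
    define r where "r = lam n / lam (Suc n)"
    define R1 where "R1 = (1 / \<alpha> (Suc n)) * \<bar>1 / lam (Suc n) - 1 / lam n\<bar>"
    define R2 where "R2 = (1 / lam (Suc n)) * \<bar>1 - \<alpha> n / \<alpha> (Suc n)\<bar>"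
    define R3 where "R3 = \<theta> n / (\<alpha> (Suc n) * lam (Suc n))"
    define R4 where "R4 = \<beta> n / \<alpha> (Suc n)"
    have pos: "0 < lam n" "0 < lam (Suc n)" "0 < \<alpha> (Suc n)"
      using rng_lam[OF n] rng_lam[of "Suc n"] rng_\<alpha>[of "Suc n"] by auto
    have R: "0 \<le> R1" "0 \<le> R2" "0 \<le> R3" "0 \<le> R4" "0 \<le> D"
      using rate_terms_nonneg[OF n] pos by (simp_all add: R1_def R2_def R3_def R4_def D_def)
    have "\<bar>\<alpha> (Suc n) - \<alpha> n\<bar> = D * R2"
      using pos by (simp add: D_def R2_def abs_mult_pos' field_simps flip: abs_mult)
    moreover have "\<bar>lam n / lam (Suc n) - 1\<bar> = r * (D * R1)"
      using pos by (simp add: D_def R1_def r_def abs_mult_pos' field_simps flip: abs_mult)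
    moreover have "\<theta> n = D * R3"
      using pos by (simp add: D_def R3_def)
    moreover have "lam n * \<beta> n = r * (D * R4)"
      using pos by (simp add: D_def R4_def r_def)
    moreover have "r \<le> \<sigma>"
      using \<sigma>(2)[OF n] by (simp add: r_def)
    then have "r * (D * R1) \<le> \<sigma> * (D * R1)" "r * (D * R4) \<le> \<sigma> * (D * R4)"
      using R by (simp_all add: mult_right_mono)
    moreover have "D * R2 \<le> \<sigma> * (D * R2)" "D * R3 \<le> \<sigma> * (D * R3)"
      using mult_right_mono[OF \<sigma>(1), of "D * R2"] mult_right_mono[OF \<sigma>(1), of "D * R3"] R
      by simp_all
    ultimately have "perturbation n \<le> \<sigma> * (D * R1) + \<sigma> * (D * R2) + \<sigma> * (D * R3) + \<sigma> * (D * R4)"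
      unfolding perturbation_def by linarith
    then show ?thesis
      by (simp add: rate_def D_def R1_def R2_def R3_def R4_def algebra_simps)
  qed
  then show ?thesis
    using that by blast
qed

lemma x_diff_rescale_le:
  obtains K where "0 \<le> K" "\<And>n. n \<ge> 1 \<Longrightarrow>
    norm (x (Suc n) - x n) / lam (Suc n) \<le> norm (x (Suc n) - x n) / lam n + K * (\<alpha> (Suc n) * rate n)"
proof -
  obtain Kw where Kw: "0 \<le> Kw" "\<And>i n. i \<in> {1..Suc M} \<Longrightarrow> norm (w i n) \<le> Kw"
    using w_bounded by blast
  have "norm (x (Suc n) - x n) / lam (Suc n) \<le> norm (x (Suc n) - x n) / lam n + 2 * Kw * (\<alpha> (Suc n) * rate n)"
    if n: "n \<ge> 1" for n
  proof -
    let ?B = "norm (x (Suc n) - x n)"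
    have B: "?B \<le> 2 * Kw"
      using norm_triangle_ineq4[of "x (Suc n)" "x n"] Kw(2)[of "Suc M" n] Kw(2)[of 1 n]
        x_step[OF n] w_first[OF n] by simp
    have "?B / lam (Suc n) = ?B / lam n + ?B * (1 / lam (Suc n) - 1 / lam n)"
      by (simp add: algebra_simps)
    also have "?B * (1 / lam (Suc n) - 1 / lam n) \<le> ?B * \<bar>1 / lam (Suc n) - 1 / lam n\<bar>"
      by (simp add: mult_left_mono)
    also have "\<dots> \<le> 2 * Kw * (\<alpha> (Suc n) * rate n)"
      using B inv_lam_diff_le_rate[OF n] Kw(1) by (intro mult_mono) auto
    finally show ?thesis
      by simp
  qed
  moreover have "0 \<le> 2 * Kw"
    using Kw(1) by simp
  ultimately show ?thesis
    using that by blast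
qed

lemma x_diff_quotient_recursion:
  obtains K where "\<And>n. n \<ge> 1 \<Longrightarrow>
    norm (x (Suc (Suc n)) - x (Suc n)) / lam (Suc n)
      \<le> (1 - \<alpha> (Suc n)) * (norm (x (Suc n) - x n) / lam n) + \<alpha> (Suc n) * (K * rate n)"
proof -
  obtain Kx where Kx: "0 \<le> Kx" "\<And>n. n \<ge> 1 \<Longrightarrow>
      norm (x (Suc (Suc n)) - x (Suc n)) \<le> (1 - \<alpha> (Suc n)) * norm (x (Suc n) - x n) + Kx * perturbation n"
    using x_diff_recursion by blast
  obtain \<sigma> where \<sigma>: "\<And>n. n \<ge> 1 \<Longrightarrow> perturbation n \<le> \<sigma> * (lam (Suc n) * \<alpha> (Suc n) * rate n)"
    using perturbation_le_rate by blast
  obtain KB where KB: "0 \<le> KB" "\<And>n. n \<ge> 1 \<Longrightarrow>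
      norm (x (Suc n) - x n) / lam (Suc n) \<le> norm (x (Suc n) - x n) / lam n + KB * (\<alpha> (Suc n) * rate n)"
    using x_diff_rescale_le by blast
  have "norm (x (Suc (Suc n)) - x (Suc n)) / lam (Suc n)
      \<le> (1 - \<alpha> (Suc n)) * (norm (x (Suc n) - x n) / lam n) + \<alpha> (Suc n) * ((KB + Kx * \<sigma>) * rate n)"
    if n: "n \<ge> 1" for n
  proof -
    let ?B = "norm (x (Suc n) - x n)" and ?a = "\<alpha> (Suc n)" and ?l' = "lam (Suc n)"
    have a: "0 \<le> 1 - ?a" "1 - ?a \<le> 1" "0 \<le> ?a" and l': "0 < ?l'"
      using rng_\<alpha>[of "Suc n"] lam_pos[of "Suc n"] by auto
    have "0 \<le> KB * (?a * rate n)"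
      using KB(1) a rate_terms_nonneg[OF n] by (simp add: rate_def)
    then have "(1 - ?a) * (KB * (?a * rate n)) \<le> KB * (?a * rate n)"
      using a(1,2) by (rule mult_left_le_one_le)
    then have "(1 - ?a) * (?B / ?l') \<le> (1 - ?a) * (?B / lam n) + KB * (?a * rate n)"
      using mult_left_mono[OF KB(2)[OF n] a(1)] by (simp only: distrib_left)
    moreover have "Kx * perturbation n / ?l' \<le> Kx * (\<sigma> * (?a * rate n))"
      using divide_right_mono[OF mult_left_mono[OF \<sigma>[OF n] Kx(1)] less_imp_le[OF l']] l' by simp
    moreover have "norm (x (Suc (Suc n)) - x (Suc n)) / ?l' \<le> (1 - ?a) * (?B / ?l') + Kx * perturbation n / ?l'"
      using divide_right_mono[OF Kx(2)[OF n], of ?l'] l' by (simp add: add_divide_distrib)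
    ultimately show ?thesis
      using l' by (simp add: algebra_simps)
  qed
  then show ?thesis
    using that by blast
qed

theorem x_diff_quotient_tendsto_zero: "(\<lambda>n. norm (x (Suc n) - x n) / lam n) \<longlonglongrightarrow> 0"
proof -
  obtain K where K: "\<And>n. n \<ge> 1 \<Longrightarrow>
      norm (x (Suc (Suc n)) - x (Suc n)) / lam (Suc n)
        \<le> (1 - \<alpha> (Suc n)) * (norm (x (Suc n) - x n) / lam n) + \<alpha> (Suc n) * (K * rate n)"
    using x_diff_quotient_recursion by blast
  show ?thesis
  proof (rule perturbed_contraction_tendsto_zero[where N = 1 and a = "\<lambda>n. \<alpha> (Suc n)"])
    show "\<not> summable (\<lambda>n. \<alpha> (Suc n))"
      using C1 summable_Suc_iff by blast
    show "(\<lambda>n. K * rate n) \<longlonglongrightarrow> 0"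
      using tendsto_mult_right_zero[OF rate_tendsto_zero] by simp
  qed (use rng_\<alpha> lam_pos K in \<open>auto simp: less_imp_le\<close>)
qed

theorem x_diff_tendsto_zero: "(\<lambda>n. norm (x (Suc n) - x n)) \<longlonglongrightarrow> 0"
proof -
  have "(\<lambda>n. norm (x (Suc n) - x n) / lam n * lam n) \<longlonglongrightarrow> 0 * 0"
    by (intro tendsto_mult x_diff_quotient_tendsto_zero lim_lam)
  moreover have "\<forall>\<^sub>F n in sequentially. norm (x (Suc n) - x n) / lam n * lam n = norm (x (Suc n) - x n)"
    using lam_pos by (intro eventually_sequentiallyI[of 1]) (simp add: less_imp_neq[symmetric])
  ultimately show ?thesis
    by (simp add: tendsto_cong)
qed

end

theorem lemma3:
  fixes M :: nat
    and f h :: "nat \<Rightarrow> 'a::{real_inner,complete_space} \<Rightarrow> real"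
    and gh :: "nat \<Rightarrow> 'a \<Rightarrow> 'a"
    and L :: "nat \<Rightarrow> real"
    and T :: "nat \<Rightarrow> 'a \<Rightarrow> 'a"
    and \<theta> lam \<beta> \<alpha> :: "nat \<Rightarrow> real"
    and x :: "nat \<Rightarrow> 'a"
    and w z d y :: "nat \<Rightarrow> nat \<Rightarrow> 'a"
    and u :: "nat \<Rightarrow> 'a"
    and S :: "'a set"
  assumes M: "M \<ge> 1"
    (* (A1) *)
    and A1_cont: "\<And>i. i \<in> {1..M} \<Longrightarrow> continuous_on UNIV (f i)"
    and A1_conv: "\<And>i. i \<in> {1..M} \<Longrightarrow> convex_on UNIV (f i)"
    (* (A2) *)
    and A2_conv: "\<And>i. i \<in> {1..M} \<Longrightarrow> convex_on UNIV (h i)"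
    and A2_grad: "\<And>i p. i \<in> {1..M} \<Longrightarrow> (h i has_derivative (\<lambda>v. inner (gh i p) v)) (at p)"
    and A2_L: "\<And>i. i \<in> {1..M} \<Longrightarrow> L i > 0"
    and A2_lip: "\<And>i p q. i \<in> {1..M} \<Longrightarrow> norm (gh i p - gh i q) \<le> (1 / L i) * norm (p - q)"
    (* (A3) *)
    and A3: "\<And>i. i \<in> {1..M} \<Longrightarrow> firmly_nonexpansive (T i)"
    (* (A4) *)
    and S_def: "S = (\<Inter>i\<in>{1..M}. Fix (T i))"
    and S_ne: "S \<noteq> {}"
    and Omega_ne: "\<exists>xh\<in>S. \<forall>v\<in>S. (\<Sum>i\<in>{1..M}. f i xh + h i xh) \<le> (\<Sum>i\<in>{1..M}. f i v + h i v)"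
    (* Condition (C) *)
    and dec_\<theta>: "\<And>n. n \<ge> 1 \<Longrightarrow> \<theta> (Suc n) \<le> \<theta> n"
    and dec_lam: "\<And>n. n \<ge> 1 \<Longrightarrow> lam (Suc n) \<le> lam n"
    and dec_\<beta>: "\<And>n. n \<ge> 1 \<Longrightarrow> \<beta> (Suc n) \<le> \<beta> n"
    and dec_\<alpha>: "\<And>n. n \<ge> 1 \<Longrightarrow> \<alpha> (Suc n) \<le> \<alpha> n"
    and lim_\<theta>: "\<theta> \<longlonglongrightarrow> 0" and lim_lam: "lam \<longlonglongrightarrow> 0"
    and lim_\<beta>: "\<beta> \<longlonglongrightarrow> 0" and lim_\<alpha>: "\<alpha> \<longlonglongrightarrow> 0"
    and rng_\<theta>: "\<And>n. n \<ge> 1 \<Longrightarrow> 0 \<le> \<theta> n \<and> \<theta> n < 1"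
    and rng_lam: "\<And>n. n \<ge> 1 \<Longrightarrow> 0 < lam n \<and> lam n \<le> 2 * Min (L ` {1..M})"
    and rng_\<beta>: "\<And>n. n \<ge> 1 \<Longrightarrow> 0 < \<beta> n \<and> \<beta> n \<le> 1"
    and rng_\<alpha>: "\<And>n. n \<ge> 1 \<Longrightarrow> 0 < \<alpha> n \<and> \<alpha> n \<le> 1"
    and C1: "\<not> summable \<alpha>"
    and C2: "(\<lambda>n. (1 / \<alpha> (Suc n)) * \<bar>1 / lam (Suc n) - 1 / lam n\<bar>) \<longlonglongrightarrow> 0"
    and C3: "(\<lambda>n. (1 / lam (Suc n)) * \<bar>1 - \<alpha> n / \<alpha> (Suc n)\<bar>) \<longlonglongrightarrow> 0"
    and C4: "(\<lambda>n. \<alpha> n / lam n) \<longlonglongrightarrow> 0"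
    and C5: "(\<lambda>n. \<theta> n / (\<alpha> (Suc n) * lam (Suc n))) \<longlonglongrightarrow> 0"
    and C6: "\<exists>\<sigma>\<ge>1. \<forall>n\<ge>1. lam n / lam (Suc n) \<le> \<sigma>"
    and C7: "(\<lambda>n. \<beta> n / \<alpha> (Suc n)) \<longlonglongrightarrow> 0"
    (* the algorithm *)
    and d_init: "\<And>i. i \<in> {1..M} \<Longrightarrow> d i 1 = - gh i (z i 0)"
    and w_first: "\<And>n. n \<ge> 1 \<Longrightarrow> w 1 n = x n"
    and z_step: "\<And>i n. i \<in> {1..M} \<Longrightarrow> n \<ge> 1 \<Longrightarrow>
                    z i n = w i n + \<theta> n *\<^sub>R (w i n - w i (n - 1))"
    and d_step: "\<And>i n. i \<in> {1..M} \<Longrightarrow> n \<ge> 1 \<Longrightarrow>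
                    d i (Suc n) = - gh i (z i n) + \<beta> n *\<^sub>R d i n"
    and y_step: "\<And>i n. i \<in> {1..M} \<Longrightarrow> n \<ge> 1 \<Longrightarrow>
                    y i n = prox (lam n) (f i) (z i n + lam n *\<^sub>R d i (Suc n))"
    and w_step: "\<And>i n. i \<in> {1..M} \<Longrightarrow> n \<ge> 1 \<Longrightarrow>
                    w (Suc i) n = \<alpha> n *\<^sub>R u i + (1 - \<alpha> n) *\<^sub>R T i (y i n)"
    and x_step: "\<And>n. n \<ge> 1 \<Longrightarrow> x (Suc n) = w (Suc M) n"
    (* boundedness hypothesis *)
    and y_bdd: "\<And>i. i \<in> {1..M} \<Longrightarrow> bounded (y i ` {1..})"
  shows "(\<lambda>n. norm (x (Suc n) - x n) / lam n) \<longlonglongrightarrow> 0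
       \<and> (\<lambda>n. norm (x (Suc n) - x n)) \<longlonglongrightarrow> 0
       \<and> (\<forall>xb\<in>S. \<forall>i\<in>{1..M}. \<exists>Q1\<ge>0. \<exists>Q2\<ge>0. \<forall>n\<ge>1.
            (norm (w (Suc i) n - xb))\<^sup>2
              \<le> (norm (w i n - xb))\<^sup>2 + \<theta> n * Q1 + \<alpha> n * Q2
                 - (1 - \<alpha> n) * (norm (T i (y i n) - y i n))\<^sup>2
                 - (norm (z i n - y i n))\<^sup>2
                 + 2 * lam n * (f i xb - f i (y i n))
                 + 2 * lam n * inner (d i (Suc n)) (y i n - xb))"
proof -
  interpret distributed_accelerated_incremental M f h gh L T \<theta> lam \<beta> \<alpha> x w z d y u
    by unfold_locales (fact assms)+
  have "T i xb = xb" if "xb \<in> S" "i \<in> {1..M}" for xb i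
    using that S_def by (auto simp: Fix_def)
  then show ?thesis
    using x_diff_quotient_tendsto_zero x_diff_tendsto_zero fejer_type_ineq by blast
qed

end
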